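(* Let $G$ be a finite (unsigned) graph. Write its chromatic symmetric function $X_G$ as a polynomial with rational coefficients in $\{\zeta_n : n\ge1\}$. Then for every $k\ge 0$, the number of acyclic orientations of $G$ with exactly $k$ sinks equals the sum of the coefficients of those monomials for which the sum of the indices $n$ of its $\zeta_n$ factors (counted with multiplicity) equals $k$.
   Context: For a finite graph $G$ with vertices $v_1,\dots,v_n$, a proper coloring is a map $\kappa:V(G)\to\{1,2,3,\dots\}$ with $\kappa(u)\ne\kappa(v)$ whenever $u,v$ are joined by an edge, and $X_G=\sum_{\kappa\text{ proper}}x_{\kappa(v_1)}\cdots x_{\kappa(v_n)}$ in commuting variables $x_1,x_2,\dots$. A sink of an orientation is a vertex with no outgoing edges. Notation: $p_a=\sum_{i\ge1}x_i^a$ and $\zeta_n=\sum_{a=1}^n\binom{n}{a}p_a$ for $n\ge1$ (equivalently $p_n=\sum_{i=1}^n\binom{n}{i}(-1)^{n-i}\zeta_i$). *)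

theory Defs
  imports Complex_Main "HOL-Library.Poly_Mapping" "HOL-Library.Multiset" "HOL-Library.FuncSet"
begin

text \<open>Formal power series in the commuting variables x_1, x_2, ... (indexed by positive
naturals) with rational coefficients, represented by their coefficient functions on
monomials (finitely supported exponent maps nat =>0 nat).\<close>

type_synonym fps_inf = "(nat \<Rightarrow>\<^sub>0 nat) \<Rightarrow> rat"

definition fpsi_one :: fps_inf where
  "fpsi_one \<alpha> = (if \<alpha> = 0 then 1 else 0)"

definition fpsi_mult :: "fps_inf \<Rightarrow> fps_inf \<Rightarrow> fps_inf" where
  "fpsi_mult f g \<alpha> = (\<Sum>(\<beta>,\<gamma>)\<in>{(\<beta>,\<gamma>). \<beta> + \<gamma> = \<alpha>}. f \<beta> * g \<gamma>)"

definition psum :: "nat \<Rightarrow> fps_inf" where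
  "psum a \<alpha> = (if \<exists>i\<ge>1. \<alpha> = Poly_Mapping.single i a then 1 else 0)"

definition zeta :: "nat \<Rightarrow> fps_inf" where
  "zeta n \<alpha> = (\<Sum>a=1..n. of_nat (n choose a) * psum a \<alpha>)"

definition zeta_mono :: "nat multiset \<Rightarrow> fps_inf" where
  "zeta_mono lam = foldr (\<lambda>n acc. fpsi_mult (zeta n) acc) (sorted_list_of_multiset lam) fpsi_one"

definition simple_graph :: "'v set \<Rightarrow> 'v set set \<Rightarrow> bool" where
  "simple_graph V E \<longleftrightarrow> finite V \<and> (\<forall>e\<in>E. e \<subseteq> V \<and> card e = 2)"

definition proper_coloring :: "'v set \<Rightarrow> 'v set set \<Rightarrow> ('v \<Rightarrow> nat) \<Rightarrow> bool" where
  "proper_coloring V E \<kappa> \<longleftrightarrow> \<kappa> \<in> V \<rightarrow>\<^sub>E {1..} \<and>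
     (\<forall>u v. {u, v} \<in> E \<longrightarrow> \<kappa> u \<noteq> \<kappa> v)"

definition chromatic_sym :: "'v set \<Rightarrow> 'v set set \<Rightarrow> fps_inf" where
  "chromatic_sym V E \<alpha> = of_nat (card {\<kappa>. proper_coloring V E \<kappa> \<and>
       (\<forall>i. Poly_Mapping.lookup \<alpha> i = card {v\<in>V. \<kappa> v = i})})"

text \<open>Orientations: D contains (u,v) meaning the edge {u,v} is directed u -> v.\<close>
definition orientation :: "'v set set \<Rightarrow> ('v \<times> 'v) set \<Rightarrow> bool" where
  "orientation E D \<longleftrightarrow> D \<subseteq> {(u, v). {u, v} \<in> E} \<and>
     (\<forall>u v. {u, v} \<in> E \<longrightarrow> ((u, v) \<in> D \<longleftrightarrow> (v, u) \<notin> D))"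

definition sinks :: "'v set \<Rightarrow> ('v \<times> 'v) set \<Rightarrow> 'v set" where
  "sinks V D = {v\<in>V. \<forall>w. (v, w) \<notin> D}"

definition acyc_orient_sinks :: "'v set \<Rightarrow> 'v set set \<Rightarrow> nat \<Rightarrow> nat" where
  "acyc_orient_sinks V E k = card {D. orientation E D \<and> acyclic D \<and> card (sinks V D) = k}"

text \<open>A polynomial in the zeta_n (n >= 1) with rational coefficients: a finitely supported
coefficient function on multisets of positive integers (the monomials).\<close>
definition zeta_poly :: "(nat multiset \<Rightarrow> rat) \<Rightarrow> bool" where
  "zeta_poly c \<longleftrightarrow> finite {lam. c lam \<noteq> 0} \<and> (\<forall>lam. c lam \<noteq> 0 \<longrightarrow> 0 \<notin># lam)"

definition zeta_eval :: "(nat multiset \<Rightarrow> rat) \<Rightarrow> fps_inf" where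
  "zeta_eval c \<alpha> = (\<Sum>lam\<in>{lam. c lam \<noteq> 0}. c lam * zeta_mono lam \<alpha>)"

end

theory Submission
  imports Defs "HOL-Computational_Algebra.Polynomial"
begin

text \<open>Existence: inclusion-exclusion over the edge sets \<open>S \<subseteq> E\<close> gives
  \<open>X_G = \<Sum>_S (-1)^|S| \<Prod>_B p_|B|\<close>, with \<open>B\<close> running over the vertex sets of the components
  of \<open>(V, S)\<close>, and inverting \<open>\<zeta>_n = \<Sum>_a (n choose a) p_a\<close> writes each \<open>p_m\<close> in the \<open>\<zeta>_j\<close>.

  Counting: since \<open>\<zeta>_n = \<Sum>_i ((1 + x_i)^n - 1)\<close>, any expression \<open>X_G = \<Sum> c_\<lambda> \<zeta>_\<lambda>\<close> can be
  evaluated at \<open>x_1 = t - 1\<close>, \<open>x_2 = ... = x_(N+1) = -1\<close>, \<open>x_i = 0\<close> otherwise, where \<open>\<zeta>_n\<close> becomes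
  \<open>t^n - 1 - N\<close>. On the colouring side, splitting off the independent set \<open>S\<close> of vertices of
  colour 1 gives \<open>\<Sum>_S (t - 1)^|S| (-1)^|V - S| \<chi>_(G - S)(N)\<close>. Both sides are polynomials in \<open>N\<close>.
  At \<open>N = -1\<close>, Stanley's theorem \<open>\<chi>_H(-1) = (-1)^|V(H)| a(H)\<close> turns the colouring side into
  \<open>\<Sum>_S (t - 1)^|S| a(G - S)\<close>, which is \<open>\<Sum>_D t^|sinks D|\<close> by counting the pairs \<open>(D, S)\<close> with
  \<open>S\<close> a set of sinks of \<open>D\<close>.\<close>

section \<open>Polynomials in finitely many variables\<close>

type_synonym mpoly = "(nat \<Rightarrow>\<^sub>0 nat) \<Rightarrow>\<^sub>0 rat"

definition mvar :: "nat \<Rightarrow> mpoly" where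
  "mvar i = Poly_Mapping.single (Poly_Mapping.single i 1) 1"

definition monom_eval :: "(nat \<Rightarrow> rat) \<Rightarrow> (nat \<Rightarrow>\<^sub>0 nat) \<Rightarrow> rat" where
  "monom_eval a \<alpha> = (\<Prod>i\<in>Poly_Mapping.keys \<alpha>. a i ^ Poly_Mapping.lookup \<alpha> i)"

definition mpoly_eval :: "(nat \<Rightarrow> rat) \<Rightarrow> mpoly \<Rightarrow> rat" where
  "mpoly_eval a F = (\<Sum>\<alpha>\<in>Poly_Mapping.keys F. Poly_Mapping.lookup F \<alpha> * monom_eval a \<alpha>)"

lemma monom_eval_superset:
  assumes "finite A" "Poly_Mapping.keys \<alpha> \<subseteq> A"
  shows "monom_eval a \<alpha> = (\<Prod>i\<in>A. a i ^ Poly_Mapping.lookup \<alpha> i)"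
  unfolding monom_eval_def
  by (rule prod.mono_neutral_left) (use assms in \<open>auto simp: in_keys_iff\<close>)

lemma keys_add_nat:
  "Poly_Mapping.keys (\<alpha> + \<beta> :: nat \<Rightarrow>\<^sub>0 nat) = Poly_Mapping.keys \<alpha> \<union> Poly_Mapping.keys \<beta>"
  by (auto simp: in_keys_iff lookup_add)

lemma monom_eval_add: "monom_eval a (\<alpha> + \<beta>) = monom_eval a \<alpha> * monom_eval a \<beta>"
proof -
  let ?A = "Poly_Mapping.keys \<alpha> \<union> Poly_Mapping.keys \<beta>"
  have "monom_eval a (\<alpha> + \<beta>) = (\<Prod>i\<in>?A. a i ^ Poly_Mapping.lookup (\<alpha> + \<beta>) i)"
    by (rule monom_eval_superset) (auto simp: keys_add_nat)
  also have "\<dots> = (\<Prod>i\<in>?A. a i ^ Poly_Mapping.lookup \<alpha> i) * (\<Prod>i\<in>?A. a i ^ Poly_Mapping.lookup \<beta> i)"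
    by (simp add: lookup_add power_add prod.distrib)
  also have "\<dots> = monom_eval a \<alpha> * monom_eval a \<beta>"
    by (subst (1 2) monom_eval_superset[of ?A]) auto
  finally show ?thesis .
qed

lemma mpoly_eval_superset:
  assumes "finite A" "Poly_Mapping.keys F \<subseteq> A"
  shows "mpoly_eval a F = (\<Sum>\<alpha>\<in>A. Poly_Mapping.lookup F \<alpha> * monom_eval a \<alpha>)"
  unfolding mpoly_eval_def
  by (rule sum.mono_neutral_left) (use assms in \<open>auto simp: in_keys_iff\<close>)

lemma mpoly_eval_add [simp]: "mpoly_eval a (F + G) = mpoly_eval a F + mpoly_eval a G"
proof -
  let ?A = "Poly_Mapping.keys F \<union> Poly_Mapping.keys G"
  have "mpoly_eval a (F + G) = (\<Sum>\<alpha>\<in>?A. Poly_Mapping.lookup (F + G) \<alpha> * monom_eval a \<alpha>)"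
    by (rule mpoly_eval_superset) (use keys_add[of F G] in auto)
  also have "\<dots> = (\<Sum>\<alpha>\<in>?A. Poly_Mapping.lookup F \<alpha> * monom_eval a \<alpha>) +
                  (\<Sum>\<alpha>\<in>?A. Poly_Mapping.lookup G \<alpha> * monom_eval a \<alpha>)"
    by (simp add: lookup_add algebra_simps sum.distrib)
  also have "\<dots> = mpoly_eval a F + mpoly_eval a G"
    by (subst (1 2) mpoly_eval_superset[of ?A]) auto
  finally show ?thesis .
qed

lemma mpoly_eval_0 [simp]: "mpoly_eval a 0 = 0"
  by (simp add: mpoly_eval_def)

lemma mpoly_eval_uminus [simp]: "mpoly_eval a (- F) = - mpoly_eval a F"
  by (simp add: mpoly_eval_def sum_negf keys.rep_eq)

lemma mpoly_eval_diff [simp]: "mpoly_eval a (F - G) = mpoly_eval a F - mpoly_eval a G"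
  using mpoly_eval_add[of a F "- G"] by simp

lemma mpoly_eval_sum [simp]: "mpoly_eval a (\<Sum>i\<in>I. F i) = (\<Sum>i\<in>I. mpoly_eval a (F i))"
  by (induction I rule: infinite_finite_induct) auto

lemma mpoly_eval_single: "mpoly_eval a (Poly_Mapping.single \<alpha> c) = c * monom_eval a \<alpha>"
  by (simp add: mpoly_eval_def)

lemma mpoly_eq_sum_single:
  "F = (\<Sum>\<alpha>\<in>Poly_Mapping.keys F. Poly_Mapping.single \<alpha> (Poly_Mapping.lookup F \<alpha>))"
  by (rule poly_mapping_eqI)
     (auto simp: lookup_sum lookup_single when_def in_keys_iff
           intro!: sym[of _ "Poly_Mapping.lookup F _"])

lemma mpoly_eval_mult [simp]: "mpoly_eval a (F * G) = mpoly_eval a F * mpoly_eval a G"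
proof -
  let ?KF = "Poly_Mapping.keys F" and ?KG = "Poly_Mapping.keys G"
  have "F * G = (\<Sum>\<alpha>\<in>?KF. Poly_Mapping.single \<alpha> (Poly_Mapping.lookup F \<alpha>)) *
                (\<Sum>\<beta>\<in>?KG. Poly_Mapping.single \<beta> (Poly_Mapping.lookup G \<beta>))"
    by (subst (1) mpoly_eq_sum_single, subst (1) mpoly_eq_sum_single[of G]) simp
  also have "\<dots> = (\<Sum>\<alpha>\<in>?KF. \<Sum>\<beta>\<in>?KG.
      Poly_Mapping.single (\<alpha> + \<beta>) (Poly_Mapping.lookup F \<alpha> * Poly_Mapping.lookup G \<beta>))"
    by (simp add: sum_product mult_single)
  finally have "mpoly_eval a (F * G) = (\<Sum>\<alpha>\<in>?KF. \<Sum>\<beta>\<in>?KG.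
      Poly_Mapping.lookup F \<alpha> * Poly_Mapping.lookup G \<beta> * (monom_eval a \<alpha> * monom_eval a \<beta>))"
    by (simp add: mpoly_eval_single monom_eval_add)
  also have "\<dots> = mpoly_eval a F * mpoly_eval a G"
    by (simp add: mpoly_eval_def sum_product algebra_simps)
  finally show ?thesis .
qed

lemma mpoly_eval_const [simp]: "mpoly_eval a (Poly_Mapping.single 0 r) = r"
  by (simp add: mpoly_eval_single monom_eval_def)

lemma mpoly_eval_1 [simp]: "mpoly_eval a 1 = 1"
  using mpoly_eval_const[of a 1] by simp

lemma mpoly_eval_mvar [simp]: "mpoly_eval a (mvar i) = a i"
  by (simp add: mvar_def mpoly_eval_single monom_eval_def)

lemma mpoly_eval_power [simp]: "mpoly_eval a (F ^ n) = mpoly_eval a F ^ n"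
  by (induction n) auto

lemma mpoly_eval_prod [simp]: "mpoly_eval a (\<Prod>i\<in>I. F i) = (\<Prod>i\<in>I. mpoly_eval a (F i))"
  by (induction I rule: infinite_finite_induct) auto

lemma mpoly_eval_prod_mset [simp]:
  "mpoly_eval a (\<Prod>x\<in>#M. F x) = (\<Prod>x\<in>#M. mpoly_eval a (F x))"
  by (induction M) auto

text \<open>\<open>F\<close> is the image of the power series \<open>f\<close> under \<open>x_i \<mapsto> 0\<close> for all \<open>i > N\<close>.\<close>
definition agrees_upto :: "nat \<Rightarrow> mpoly \<Rightarrow> fps_inf \<Rightarrow> bool" where
  "agrees_upto N F f \<longleftrightarrow>
     (\<forall>\<alpha>. Poly_Mapping.keys \<alpha> \<subseteq> {..N} \<longrightarrow> Poly_Mapping.lookup F \<alpha> = f \<alpha>)"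

lemma mpoly_eval_agrees_upto:
  assumes "agrees_upto N F f" "agrees_upto N H f" and a: "\<And>i. N < i \<Longrightarrow> a i = 0"
  shows "mpoly_eval a F = mpoly_eval a H"
proof -
  let ?K = "Poly_Mapping.keys F \<union> Poly_Mapping.keys H"
  have eq: "Poly_Mapping.lookup F \<alpha> * monom_eval a \<alpha> = Poly_Mapping.lookup H \<alpha> * monom_eval a \<alpha>" for \<alpha>
  proof (cases "Poly_Mapping.keys \<alpha> \<subseteq> {..N}")
    case True thus ?thesis using assms by (simp add: agrees_upto_def)
  next
    case False
    then obtain i where "i \<in> Poly_Mapping.keys \<alpha>" "N < i" by (meson atMost_iff not_le subsetI)
    hence "monom_eval a \<alpha> = 0"
      unfolding monom_eval_def using a by (intro prod_zero bexI[of _ i]) (auto simp: in_keys_iff)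
    thus ?thesis by simp
  qed
  have "mpoly_eval a F = (\<Sum>\<alpha>\<in>?K. Poly_Mapping.lookup F \<alpha> * monom_eval a \<alpha>)"
    by (rule mpoly_eval_superset) auto
  also have "\<dots> = (\<Sum>\<alpha>\<in>?K. Poly_Mapping.lookup H \<alpha> * monom_eval a \<alpha>)"
    by (rule sum.cong[OF refl eq])
  also have "\<dots> = mpoly_eval a H"
    by (rule mpoly_eval_superset[symmetric]) auto
  finally show ?thesis .
qed

lemma finite_lookup_le:
  "finite {\<beta>::nat \<Rightarrow>\<^sub>0 nat. \<forall>i. Poly_Mapping.lookup \<beta> i \<le> Poly_Mapping.lookup \<alpha> i}"
  (is "finite ?B")
proof -
  let ?K = "Poly_Mapping.keys \<alpha>"
  have "inj_on (\<lambda>\<beta>. restrict (Poly_Mapping.lookup \<beta>) ?K) ?B"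
  proof (rule inj_onI, rule poly_mapping_eqI)
    fix \<beta> \<gamma> i assume \<beta>: "\<beta> \<in> ?B" and \<gamma>: "\<gamma> \<in> ?B"
      and eq: "restrict (Poly_Mapping.lookup \<beta>) ?K = restrict (Poly_Mapping.lookup \<gamma>) ?K"
    show "Poly_Mapping.lookup \<beta> i = Poly_Mapping.lookup \<gamma> i"
    proof (cases "i \<in> ?K")
      case True thus ?thesis using fun_cong[OF eq, of i] by simp
    next
      case False
      hence "Poly_Mapping.lookup \<alpha> i = 0" by (simp add: in_keys_iff)
      thus ?thesis using \<beta> \<gamma> by (metis (mono_tags, lifting) le_zero_eq mem_Collect_eq)
    qed
  qed
  moreover have "(\<lambda>\<beta>. restrict (Poly_Mapping.lookup \<beta>) ?K) ` ?B \<subseteq> PiE ?K (\<lambda>i. {..Poly_Mapping.lookup \<alpha> i})"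
    by auto
  moreover have "finite (PiE ?K (\<lambda>i. {..Poly_Mapping.lookup \<alpha> i}))"
    by (rule finite_PiE) auto
  ultimately show ?thesis by (meson finite_imageD finite_subset)
qed

lemma finite_add_eq: "finite {(\<beta>, \<gamma>). \<beta> + \<gamma> = (\<alpha>::nat \<Rightarrow>\<^sub>0 nat)}"
proof -
  let ?B = "{\<beta>::nat \<Rightarrow>\<^sub>0 nat. \<forall>i. Poly_Mapping.lookup \<beta> i \<le> Poly_Mapping.lookup \<alpha> i}"
  have "{(\<beta>, \<gamma>). \<beta> + \<gamma> = \<alpha>} \<subseteq> ?B \<times> ?B" by (auto simp: lookup_add)
  thus ?thesis using finite_lookup_le by (meson finite_SigmaI finite_subset)
qed

lemma agrees_upto_mult:
  assumes "agrees_upto N F f" "agrees_upto N G g"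
  shows "agrees_upto N (F * G) (fpsi_mult f g)"
  unfolding agrees_upto_def
proof (intro allI impI)
  fix \<alpha> :: "nat \<Rightarrow>\<^sub>0 nat" assume K: "Poly_Mapping.keys \<alpha> \<subseteq> {..N}"
  let ?D = "{(\<beta>, \<gamma>). \<beta> + \<gamma> = \<alpha>}"
  have "Poly_Mapping.lookup (F * G) \<alpha> =
        (\<Sum>(\<beta>, \<gamma>). Poly_Mapping.lookup F \<beta> * Poly_Mapping.lookup G \<gamma> when \<alpha> = \<beta> + \<gamma>)"
    by (simp add: times_poly_mapping.rep_eq prod_fun_unfold_prod)
  also have "\<dots> = (\<Sum>(\<beta>, \<gamma>)\<in>?D. Poly_Mapping.lookup F \<beta> * Poly_Mapping.lookup G \<gamma> when \<alpha> = \<beta> + \<gamma>)"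
    by (rule Sum_any.expand_superset) (use finite_add_eq in auto)
  also have "\<dots> = (\<Sum>(\<beta>, \<gamma>)\<in>?D. f \<beta> * g \<gamma>)"
  proof (intro sum.cong refl, clarsimp)
    fix \<beta> \<gamma> assume "\<alpha> = \<beta> + \<gamma>"
    hence "Poly_Mapping.keys \<beta> \<subseteq> {..N}" "Poly_Mapping.keys \<gamma> \<subseteq> {..N}"
      using K keys_add_nat by auto
    thus "Poly_Mapping.lookup F \<beta> * Poly_Mapping.lookup G \<gamma> = f \<beta> * g \<gamma>"
      using assms unfolding agrees_upto_def by auto
  qed
  finally show "Poly_Mapping.lookup (F * G) \<alpha> = fpsi_mult f g \<alpha>"
    by (simp add: fpsi_mult_def)
qed

lemma agrees_upto_1: "agrees_upto N 1 fpsi_one"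
  by (auto simp: agrees_upto_def fpsi_one_def lookup_one)

lemma agrees_upto_linear_combination:
  assumes "\<And>i. i \<in> I \<Longrightarrow> agrees_upto N (F i) (f i)"
  shows "agrees_upto N (\<Sum>i\<in>I. Poly_Mapping.single 0 (c i) * F i) (\<lambda>\<alpha>. \<Sum>i\<in>I. c i * f i \<alpha>)"
  using assms
  by (auto simp: agrees_upto_def lookup_sum map.rep_eq when_def simp flip: mult_map_scale_conv_mult
           intro!: sum.cong)

definition zeta_trunc :: "nat \<Rightarrow> nat \<Rightarrow> mpoly" where
  "zeta_trunc N n = (\<Sum>i\<in>{1..N}. (1 + mvar i) ^ n - 1)"

definition zeta_mono_trunc :: "nat \<Rightarrow> nat multiset \<Rightarrow> mpoly" where
  "zeta_mono_trunc N lam = (\<Prod>n\<in>#lam. zeta_trunc N n)"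

lemma mvar_power: "mvar i ^ a = Poly_Mapping.single (Poly_Mapping.single i a) 1"
proof (induction a)
  case (Suc a)
  have "Poly_Mapping.single i (Suc a) = Poly_Mapping.single i 1 + Poly_Mapping.single i a"
    by (simp flip: single_add)
  thus ?case using Suc by (simp add: mvar_def mult_single)
qed simp

lemma one_plus_mvar_power_minus_one:
  "(1 + mvar i) ^ n - 1 =
     (\<Sum>a\<in>{1..n}. Poly_Mapping.single (Poly_Mapping.single i a) (of_nat (n choose a)))"
proof -
  have "(1 + mvar i) ^ n = (mvar i + 1) ^ n" by (simp add: add.commute)
  also have "\<dots> = (\<Sum>a\<le>n. of_nat (n choose a) * mvar i ^ a)"
    by (simp add: binomial_ring)
  also have "{..n} = insert 0 {1..n}" by auto
  finally have "(1 + mvar i) ^ n - 1 = (\<Sum>a\<in>{1..n}. of_nat (n choose a) * mvar i ^ a)"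
    by simp
  thus ?thesis by (simp add: mvar_power mult_single flip: single_of_nat)
qed

lemma agrees_upto_zeta_trunc: "agrees_upto N (zeta_trunc N n) (zeta n)"
  unfolding agrees_upto_def
proof (intro allI impI)
  fix \<alpha> :: "nat \<Rightarrow>\<^sub>0 nat" assume K: "Poly_Mapping.keys \<alpha> \<subseteq> {..N}"
  have "Poly_Mapping.lookup (zeta_trunc N n) \<alpha> =
      (\<Sum>i\<in>{1..N}. \<Sum>a\<in>{1..n}. if Poly_Mapping.single i a = \<alpha> then of_nat (n choose a) else 0)"
    by (simp add: zeta_trunc_def one_plus_mvar_power_minus_one lookup_sum lookup_single when_def)
  also have "\<dots> =
      (\<Sum>a\<in>{1..n}. of_nat (n choose a) * (\<Sum>i\<in>{1..N}. 1 when Poly_Mapping.single i a = \<alpha>))"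
    by (subst sum.swap) (simp add: sum_distrib_left when_def if_distrib cong: if_cong)
  also have "\<dots> = (\<Sum>a\<in>{1..n}. of_nat (n choose a) * psum a \<alpha>)"
  proof (intro sum.cong refl arg_cong2[where f = "(*)"])
    fix a assume a: "a \<in> {1..n}"
    show "(\<Sum>i\<in>{1..N}. 1 when Poly_Mapping.single i a = \<alpha>) = psum a \<alpha>"
    proof (cases "\<exists>i\<ge>1. \<alpha> = Poly_Mapping.single i a")
      case True
      then obtain i where i: "i \<ge> 1" "\<alpha> = Poly_Mapping.single i a" by auto
      have "i \<in> {1..N}" using K i a by auto
      moreover have "Poly_Mapping.single j a = \<alpha> \<longleftrightarrow> j = i" for j
        using i a by (metis atLeastAtMost_iff lookup_single_eq lookup_single_not_eq not_one_le_zero)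
      ultimately show ?thesis using True by (simp add: psum_def when_def)
    next
      case False
      thus ?thesis by (auto simp: psum_def when_def intro!: sum.neutral)
    qed
  qed
  finally show "Poly_Mapping.lookup (zeta_trunc N n) \<alpha> = zeta n \<alpha>"
    by (simp add: zeta_def)
qed

lemma agrees_upto_zeta_mono_trunc: "agrees_upto N (zeta_mono_trunc N lam) (zeta_mono lam)"
proof -
  have "agrees_upto N (\<Prod>n\<in>#mset xs. zeta_trunc N n) (foldr (\<lambda>n acc. fpsi_mult (zeta n) acc) xs fpsi_one)"
    for xs
    by (induction xs) (auto intro: agrees_upto_mult agrees_upto_1 agrees_upto_zeta_trunc)
  from this[of "sorted_list_of_multiset lam"] show ?thesis
    by (simp add: zeta_mono_trunc_def zeta_mono_def)
qed

lemma agrees_upto_zeta_eval: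
  "agrees_upto N (\<Sum>lam | c lam \<noteq> 0. Poly_Mapping.single 0 (c lam) * zeta_mono_trunc N lam) (zeta_eval c)"
  using agrees_upto_linear_combination[OF agrees_upto_zeta_mono_trunc]
  by (simp add: zeta_eval_def[abs_def])

section \<open>Graphs and colourings\<close>

definition indep_set :: "'v set \<Rightarrow> 'v set set \<Rightarrow> 'v set \<Rightarrow> bool" where
  "indep_set V E S \<longleftrightarrow> S \<subseteq> V \<and> (\<forall>e\<in>E. \<not> e \<subseteq> S)"

text \<open>The edges of the induced subgraph \<open>G - S\<close>, whose vertex set is \<open>V - S\<close>.\<close>
definition edges_avoiding :: "'v set set \<Rightarrow> 'v set \<Rightarrow> 'v set set" where
  "edges_avoiding E S = {e\<in>E. e \<inter> S = {}}"

lemma simple_graph_finite: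
  assumes "simple_graph V E"
  shows "finite V" "finite E"
  using assms unfolding simple_graph_def by (auto intro: rev_finite_subset[of "Pow V"])

lemma simple_graph_edgeD:
  assumes "simple_graph V E" "{u, v} \<in> E"
  shows "u \<noteq> v" "u \<in> V" "v \<in> V"
  using assms unfolding simple_graph_def
  by (auto dest!: bspec[of _ _ "{u,v}"] simp: card_insert_if split: if_splits)

lemma simple_graph_edges_avoiding:
  "simple_graph V E \<Longrightarrow> simple_graph (V - S) (edges_avoiding E S)"
  unfolding simple_graph_def edges_avoiding_def by auto

lemma finite_indep_set:
  "finite V \<Longrightarrow> finite {S. indep_set V E S}"
  by (rule finite_subset[of _ "Pow V"]) (auto simp: indep_set_def)

lemma simple_graph_edges_subset: "simple_graph V E \<Longrightarrow> S \<subseteq> E \<Longrightarrow> \<forall>e\<in>S. e \<subseteq> V"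
  unfolding simple_graph_def by auto

definition colorings :: "nat \<Rightarrow> 'v set \<Rightarrow> ('v \<Rightarrow> nat) set" where
  "colorings N V = V \<rightarrow>\<^sub>E {1..N}"

definition proper :: "'v set set \<Rightarrow> ('v \<Rightarrow> nat) \<Rightarrow> bool" where
  "proper E \<kappa> \<longleftrightarrow> (\<forall>u v. {u, v} \<in> E \<longrightarrow> \<kappa> u \<noteq> \<kappa> v)"

definition proper_colorings :: "nat \<Rightarrow> 'v set \<Rightarrow> 'v set set \<Rightarrow> ('v \<Rightarrow> nat) set" where
  "proper_colorings N V E = {\<kappa>\<in>colorings N V. proper E \<kappa>}"

definition color_content :: "'v set \<Rightarrow> ('v \<Rightarrow> nat) \<Rightarrow> (nat \<Rightarrow>\<^sub>0 nat)" where
  "color_content V \<kappa> = (\<Sum>v\<in>V. Poly_Mapping.single (\<kappa> v) 1)"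

definition chromatic_trunc :: "'v set \<Rightarrow> 'v set set \<Rightarrow> nat \<Rightarrow> mpoly" where
  "chromatic_trunc V E N = (\<Sum>\<kappa>\<in>proper_colorings N V E. \<Prod>v\<in>V. mvar (\<kappa> v))"

lemma finite_colorings: "finite V \<Longrightarrow> finite (colorings N V)"
  unfolding colorings_def by (rule finite_PiE) auto

lemma finite_proper_colorings: "finite V \<Longrightarrow> finite (proper_colorings N V E)"
  unfolding proper_colorings_def by (rule finite_subset[OF _ finite_colorings]) auto

lemma prod_mvar: "finite V \<Longrightarrow> (\<Prod>v\<in>V. mvar (\<kappa> v)) = Poly_Mapping.single (color_content V \<kappa>) 1"
  unfolding color_content_def mvar_def
  by (induction V rule: finite_induct) (auto simp: mult_single)

lemma lookup_color_content:
  "finite V \<Longrightarrow> Poly_Mapping.lookup (color_content V \<kappa>) i = card {v\<in>V. \<kappa> v = i}"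
  unfolding color_content_def by (simp add: lookup_sum lookup_single when_def sum.If_cases Int_def)

lemma agrees_upto_chromatic_trunc:
  assumes fin: "finite V"
  shows "agrees_upto N (chromatic_trunc V E N) (chromatic_sym V E)"
  unfolding agrees_upto_def
proof (intro allI impI)
  fix \<alpha> :: "nat \<Rightarrow>\<^sub>0 nat" assume K: "Poly_Mapping.keys \<alpha> \<subseteq> {..N}"
  have "Poly_Mapping.lookup (chromatic_trunc V E N) \<alpha> =
        of_nat (card {\<kappa>\<in>proper_colorings N V E. color_content V \<kappa> = \<alpha>})"
    by (simp add: chromatic_trunc_def lookup_sum prod_mvar fin lookup_single when_def
        sum.If_cases finite_proper_colorings Int_def)
  also have "{\<kappa>\<in>proper_colorings N V E. color_content V \<kappa> = \<alpha>} =
      {\<kappa>. proper_coloring V E \<kappa> \<and> (\<forall>i. Poly_Mapping.lookup \<alpha> i = card {v\<in>V. \<kappa> v = i})}"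
  proof (intro set_eqI iffI)
    fix \<kappa> assume "\<kappa> \<in> {\<kappa>\<in>proper_colorings N V E. color_content V \<kappa> = \<alpha>}"
    thus "\<kappa> \<in> {\<kappa>. proper_coloring V E \<kappa> \<and> (\<forall>i. Poly_Mapping.lookup \<alpha> i = card {v\<in>V. \<kappa> v = i})}"
      by (auto simp: proper_colorings_def colorings_def proper_def proper_coloring_def
          lookup_color_content fin)
  next
    fix \<kappa>
    assume \<kappa>: "\<kappa> \<in> {\<kappa>. proper_coloring V E \<kappa> \<and> (\<forall>i. Poly_Mapping.lookup \<alpha> i = card {v\<in>V. \<kappa> v = i})}"
    have "\<kappa> v \<le> N" if "v \<in> V" for v
    proof -
      have "card {w\<in>V. \<kappa> w = \<kappa> v} \<noteq> 0" using that fin by (subst card_0_eq) auto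
      hence "\<kappa> v \<in> Poly_Mapping.keys \<alpha>" using \<kappa> by (simp add: in_keys_iff)
      thus ?thesis using K by auto
    qed
    moreover have "color_content V \<kappa> = \<alpha>"
      using \<kappa> by (intro poly_mapping_eqI) (simp add: lookup_color_content fin)
    ultimately show "\<kappa> \<in> {\<kappa>\<in>proper_colorings N V E. color_content V \<kappa> = \<alpha>}"
      using \<kappa> by (auto simp: proper_colorings_def colorings_def proper_def proper_coloring_def)
  qed
  finally show "Poly_Mapping.lookup (chromatic_trunc V E N) \<alpha> = chromatic_sym V E \<alpha>"
    by (simp add: chromatic_sym_def)
qed

lemma sum_proper_colorings_specialise:
  assumes G: "simple_graph V E" and c: "zeta_eval c = chromatic_sym V E"
    and a: "\<And>i. i \<notin> {1..N} \<Longrightarrow> a i = 0"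
  shows "(\<Sum>\<kappa>\<in>proper_colorings N V E. \<Prod>v\<in>V. a (\<kappa> v)) =
    (\<Sum>lam | c lam \<noteq> 0. c lam * (\<Prod>n\<in>#lam. \<Sum>i\<in>{1..N}. (1 + a i) ^ n - 1))"
proof -
  let ?H = "\<Sum>lam | c lam \<noteq> 0. Poly_Mapping.single 0 (c lam) * zeta_mono_trunc N lam"
  have "agrees_upto N (chromatic_trunc V E N) (chromatic_sym V E)"
    using agrees_upto_chromatic_trunc simple_graph_finite(1)[OF G] .
  moreover have "agrees_upto N ?H (chromatic_sym V E)"
    using agrees_upto_zeta_eval[of N c] by (simp add: c)
  ultimately have "mpoly_eval a (chromatic_trunc V E N) = mpoly_eval a ?H"
    by (rule mpoly_eval_agrees_upto) (use a in auto)
  thus ?thesis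
    by (simp add: chromatic_trunc_def zeta_mono_trunc_def zeta_trunc_def)
qed

section \<open>Expansion of the chromatic symmetric function in the \<open>\<zeta>_n\<close>\<close>

lemma prod_of_bool:
  "finite A \<Longrightarrow> (\<Prod>x\<in>A. (of_bool (P x) :: 'a::comm_semiring_1)) = of_bool (\<forall>x\<in>A. P x)"
  by (induction A rule: finite_induct) auto

lemma of_bool_all_not_eq_sum_Pow:
  assumes "finite E"
  shows "(of_bool (\<forall>e\<in>E. \<not> P e) :: 'a::comm_ring_1) =
         (\<Sum>S\<in>Pow E. (-1) ^ card S * of_bool (\<forall>e\<in>S. P e))"
proof -
  have "(\<Prod>e\<in>E. - of_bool (P e) + 1) = (of_bool (\<forall>e\<in>E. \<not> P e) :: 'a)"
    using assms by (induction E rule: finite_induct) auto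
  hence "(of_bool (\<forall>e\<in>E. \<not> P e) :: 'a) = (\<Prod>e\<in>E. - of_bool (P e) + 1)" ..
  also have "\<dots> = (\<Sum>S\<in>Pow E. (\<Prod>e\<in>S. - of_bool (P e)) * (\<Prod>e\<in>E - S. 1))"
    by (rule prod_add[OF assms])
  also have "\<dots> = (\<Sum>S\<in>Pow E. (-1) ^ card S * of_bool (\<forall>e\<in>S. P e))"
    using assms by (intro sum.cong refl) (auto simp: prod_uminus prod_of_bool finite_subset)
  finally show ?thesis .
qed

definition monochromatic :: "'v set set \<Rightarrow> ('v \<Rightarrow> nat) \<Rightarrow> bool" where
  "monochromatic S \<kappa> \<longleftrightarrow> (\<forall>e\<in>S. \<forall>u\<in>e. \<forall>v\<in>e. \<kappa> u = \<kappa> v)"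

lemma proper_iff_not_monochromatic:
  assumes "simple_graph V E"
  shows "proper E \<kappa> \<longleftrightarrow> (\<forall>e\<in>E. \<not> monochromatic {e} \<kappa>)"
proof -
  have "\<exists>u v. e = {u, v} \<and> u \<noteq> v" if "e \<in> E" for e
    using assms that by (auto simp: simple_graph_def card_2_iff)
  thus ?thesis by (fastforce simp: proper_def monochromatic_def)
qed

lemma chromatic_trunc_inclusion_exclusion:
  fixes V :: "'v set"
  assumes G: "simple_graph V E"
  shows "chromatic_trunc V E N = (\<Sum>S\<in>Pow E. of_int ((-1) ^ card S) *
            (\<Sum>\<kappa>\<in>{\<kappa>\<in>colorings N V. monochromatic S \<kappa>}. \<Prod>v\<in>V. mvar (\<kappa> v)))"
proof -
  note fin = simple_graph_finite[OF G]
  have "chromatic_trunc V E N = (\<Sum>\<kappa>\<in>colorings N V. of_bool (proper E \<kappa>) * (\<Prod>v\<in>V. mvar (\<kappa> v)))"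
    by (simp add: chromatic_trunc_def proper_colorings_def finite_colorings fin
        Collect_conj_eq Int_commute)
  also have "\<dots> = (\<Sum>\<kappa>\<in>colorings N V. \<Sum>S\<in>Pow E.
      of_int ((-1) ^ card S) * (of_bool (monochromatic S \<kappa>) * (\<Prod>v\<in>V. mvar (\<kappa> v))))"
  proof (rule sum.cong[OF refl])
    fix \<kappa> :: "'v \<Rightarrow> nat"
    have "(\<forall>e\<in>S. monochromatic {e} \<kappa>) = monochromatic S \<kappa>" for S
      by (auto simp: monochromatic_def)
    hence "(of_bool (proper E \<kappa>) :: mpoly) =
           (\<Sum>S\<in>Pow E. (-1) ^ card S * of_bool (monochromatic S \<kappa>))"
      unfolding proper_iff_not_monochromatic[OF G] by (simp add: of_bool_all_not_eq_sum_Pow fin)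
    thus "of_bool (proper E \<kappa>) * (\<Prod>v\<in>V. mvar (\<kappa> v)) = (\<Sum>S\<in>Pow E.
        of_int ((-1) ^ card S) * (of_bool (monochromatic S \<kappa>) * (\<Prod>v\<in>V. mvar (\<kappa> v))))"
      by (simp add: sum_distrib_right mult.assoc)
  qed
  also have "\<dots> = (\<Sum>S\<in>Pow E. of_int ((-1) ^ card S) *
      (\<Sum>\<kappa>\<in>colorings N V. of_bool (monochromatic S \<kappa>) * (\<Prod>v\<in>V. mvar (\<kappa> v))))"
    by (subst sum.swap) (simp add: sum_distrib_left)
  also have "\<dots> = (\<Sum>S\<in>Pow E. of_int ((-1) ^ card S) *
      (\<Sum>\<kappa>\<in>{\<kappa>\<in>colorings N V. monochromatic S \<kappa>}. \<Prod>v\<in>V. mvar (\<kappa> v)))"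
    by (simp add: finite_colorings fin Collect_conj_eq Int_commute)
  finally show ?thesis .
qed

lemma quotient_class_eq:
  assumes "equiv V R" "B \<in> V // R" "v \<in> B"
  shows "R``{v} = B"
  using assms by (metis Image_singleton_iff equiv_class_eq quotientE)

lemma the_elem_image_class:
  assumes "equiv V R" "\<forall>(u, w)\<in>R. \<kappa> u = \<kappa> w" "B \<in> V // R" "v \<in> B"
  shows "the_elem (\<kappa> ` B) = \<kappa> v"
proof -
  have "\<kappa> ` B = {\<kappa> v}" using assms in_quotient_imp_in_rel[OF assms(1,3)] by fastforce
  thus ?thesis by simp
qed

lemma bij_betw_quotient_PiE:
  assumes R: "equiv V R"
  shows "bij_betw (\<lambda>g. \<lambda>v\<in>V. g (R``{v}))
           (V // R \<rightarrow>\<^sub>E A) {\<kappa> \<in> V \<rightarrow>\<^sub>E A. \<forall>(u, v)\<in>R. \<kappa> u = \<kappa> v}"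
    (is "bij_betw ?f ?P ?T")
proof (rule bij_betw_byWitness[where f' = "\<lambda>\<kappa>. \<lambda>B\<in>V // R. the_elem (\<kappa> ` B)"])
  have own_class: "R``{v} \<in> V // R" "v \<in> R``{v}" if "v \<in> V" for v
    using that equiv_class_self[OF R] by (auto intro: quotientI)
  have f_in: "?f g \<in> ?T" if "g \<in> ?P" for g
    using that own_class equiv_class_eq_iff[OF R] by fastforce
  thus "?f ` ?P \<subseteq> ?T" by blast
  show "\<forall>g\<in>?P. (\<lambda>B\<in>V // R. the_elem (?f g ` B)) = g"
  proof (intro ballI ext)
    fix g B assume g: "g \<in> ?P"
    show "(\<lambda>B\<in>V // R. the_elem (?f g ` B)) B = g B"
    proof (cases "B \<in> V // R")
      case True
      then obtain v where v: "v \<in> B" using in_quotient_imp_non_empty[OF R] by blast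
      hence "v \<in> V" using in_quotient_imp_subset[OF R True] by blast
      have "the_elem (?f g ` B) = ?f g v"
        using f_in[OF g] by (intro the_elem_image_class[OF R _ True v]) blast
      also have "\<dots> = g B" using \<open>v \<in> V\<close> quotient_class_eq[OF R True v] by simp
      finally show ?thesis using True by simp
    qed (use g in auto)
  qed
  show "\<forall>\<kappa>\<in>?T. ?f (\<lambda>B\<in>V // R. the_elem (\<kappa> ` B)) = \<kappa>"
  proof (intro ballI ext)
    fix \<kappa> v assume "\<kappa> \<in> ?T"
    thus "?f (\<lambda>B\<in>V // R. the_elem (\<kappa> ` B)) v = \<kappa> v"
      using the_elem_image_class[OF R _ own_class] own_class by (cases "v \<in> V") auto
  qed
  show "(\<lambda>\<kappa>. \<lambda>B\<in>V // R. the_elem (\<kappa> ` B)) ` ?T \<subseteq> ?P"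
  proof clarsimp
    fix \<kappa> B assume \<kappa>: "\<kappa> \<in> V \<rightarrow>\<^sub>E A" "\<forall>(u, v)\<in>R. \<kappa> u = \<kappa> v" and B: "B \<in> V // R"
    obtain v where v: "v \<in> B" using in_quotient_imp_non_empty[OF R B] by blast
    have "the_elem (\<kappa> ` B) = \<kappa> v" by (rule the_elem_image_class[OF R \<kappa>(2) B v])
    moreover have "v \<in> V" using in_quotient_imp_subset[OF R B] v by blast
    ultimately show "the_elem (\<kappa> ` B) \<in> A" using \<kappa>(1) by auto
  qed
qed

lemma prod_quotient_power_card:
  fixes f :: "'a set \<Rightarrow> 'b::comm_monoid_mult"
  assumes R: "equiv V R" and fin: "finite V"
  shows "(\<Prod>v\<in>V. f (R``{v})) = (\<Prod>B\<in>V // R. f B ^ card B)"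
proof -
  have "(\<Prod>v\<in>V. f (R``{v})) = (\<Prod>B\<in>(\<lambda>v. R``{v}) ` V. \<Prod>v\<in>{x\<in>V. R``{x} = B}. f (R``{v}))"
    by (rule prod.image_gen[OF fin])
  also have "\<dots> = (\<Prod>B\<in>V // R. \<Prod>v\<in>B. f B)"
  proof (rule prod.cong)
    show "(\<lambda>v. R``{v}) ` V = V // R" by (auto simp: quotient_def)
  next
    fix B assume B: "B \<in> V // R"
    hence "{x\<in>V. R``{x} = B} = B"
      using quotient_class_eq[OF R B] in_quotient_imp_subset[OF R B] equiv_class_self[OF R] by blast
    thus "(\<Prod>v\<in>{x\<in>V. R``{x} = B}. f (R``{v})) = (\<Prod>v\<in>B. f B)"
      using quotient_class_eq[OF R B] by simp
  qed
  finally show ?thesis by simp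
qed

text \<open>The classes of \<open>component_rel V S\<close> are the vertex sets of the connected components
  of the spanning subgraph \<open>(V, S)\<close>.\<close>
definition component_rel :: "'v set \<Rightarrow> 'v set set \<Rightarrow> ('v \<times> 'v) set" where
  "component_rel V S = Id_on V \<union> {(u, v). \<exists>e\<in>S. u \<in> e \<and> v \<in> e}\<^sup>+"

definition blocks :: "'v set \<Rightarrow> 'v set set \<Rightarrow> 'v set set" where
  "blocks V S = V // component_rel V S"

lemma equiv_component_rel:
  assumes "\<forall>e\<in>S. e \<subseteq> V"
  shows "equiv V (component_rel V S)"
proof (rule equivI)
  let ?r = "{(u, v). \<exists>e\<in>S. u \<in> e \<and> v \<in> e}"
  have "?r\<^sup>+ \<subseteq> V \<times> V" using assms by (intro trancl_subset_Sigma) auto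
  thus "component_rel V S \<subseteq> V \<times> V" by (auto simp: component_rel_def)
  show "refl_on V (component_rel V S)" by (auto simp: refl_on_def component_rel_def)
  have "sym (?r\<^sup>+)" by (intro sym_trancl) (auto simp: sym_def)
  thus "sym (component_rel V S)" by (auto simp: sym_def component_rel_def)
  show "trans (component_rel V S)"
    unfolding component_rel_def trans_def by (auto intro: trancl_trans)
qed

lemma monochromatic_iff_component_rel:
  "monochromatic S \<kappa> \<longleftrightarrow> (\<forall>(u, v)\<in>component_rel V S. \<kappa> u = \<kappa> v)"
proof
  assume m: "monochromatic S \<kappa>"
  have "\<kappa> u = \<kappa> v" if "(u, v) \<in> {(u, v). \<exists>e\<in>S. u \<in> e \<and> v \<in> e}\<^sup>+" for u v
    using that by (induction rule: trancl_induct) (use m in \<open>auto simp: monochromatic_def\<close>)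
  thus "\<forall>(u, v)\<in>component_rel V S. \<kappa> u = \<kappa> v" by (auto simp: component_rel_def)
qed (auto simp: monochromatic_def component_rel_def)

definition power_sum_trunc :: "nat \<Rightarrow> nat \<Rightarrow> mpoly" where
  "power_sum_trunc N m = (\<Sum>i\<in>{1..N}. mvar i ^ m)"

lemma sum_monochromatic_colorings:
  assumes fin: "finite V" and S: "\<forall>e\<in>S. e \<subseteq> V"
  shows "(\<Sum>\<kappa>\<in>{\<kappa>\<in>colorings N V. monochromatic S \<kappa>}. \<Prod>v\<in>V. mvar (\<kappa> v)) =
         (\<Prod>B\<in>blocks V S. power_sum_trunc N (card B))"
proof -
  let ?R = "component_rel V S"
  have R: "equiv V ?R" using equiv_component_rel[OF S] .
  have "{\<kappa>\<in>colorings N V. monochromatic S \<kappa>} = {\<kappa> \<in> V \<rightarrow>\<^sub>E {1..N}. \<forall>(u, v)\<in>?R. \<kappa> u = \<kappa> v}"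
    by (auto simp: colorings_def monochromatic_iff_component_rel[of S _ V])
  hence "(\<Sum>\<kappa>\<in>{\<kappa>\<in>colorings N V. monochromatic S \<kappa>}. \<Prod>v\<in>V. mvar (\<kappa> v)) =
         (\<Sum>g\<in>V // ?R \<rightarrow>\<^sub>E {1..N}. \<Prod>v\<in>V. mvar (g (?R``{v})))"
    using sum.reindex_bij_betw[OF bij_betw_quotient_PiE[OF R], of "\<lambda>\<kappa>. \<Prod>v\<in>V. mvar (\<kappa> v)"]
    by simp
  also have "\<dots> = (\<Sum>g\<in>V // ?R \<rightarrow>\<^sub>E {1..N}. \<Prod>B\<in>V // ?R. mvar (g B) ^ card B)"
    by (intro sum.cong refl prod_quotient_power_card[OF R fin])
  also have "\<dots> = (\<Prod>B\<in>V // ?R. \<Sum>i\<in>{1..N}. mvar i ^ card B)"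
    by (rule prod_sum_PiE[symmetric]) (use finite_quotient[OF fin equiv_type[OF R]] in auto)
  finally show ?thesis by (simp add: blocks_def power_sum_trunc_def)
qed

text \<open>The coefficient of \<open>\<zeta>_j\<close> in \<open>p_m\<close>.\<close>
definition psum_zeta_coeff :: "nat \<Rightarrow> nat \<Rightarrow> int" where
  "psum_zeta_coeff m j = (-1) ^ (m - j) * int (m choose j)"

lemma power_eq_sum_psum_zeta_coeff:
  assumes "m \<ge> 1"
  shows "(x :: 'a::comm_ring_1) ^ m = (\<Sum>j\<in>{1..m}. of_int (psum_zeta_coeff m j) * ((1 + x) ^ j - 1))"
proof -
  have "x ^ m = ((1 + x) + (-1)) ^ m" by simp
  also have "\<dots> = (\<Sum>j\<le>m. of_nat (m choose j) * (1 + x) ^ j * (-1) ^ (m - j))"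
    by (rule binomial_ring)
  also have "\<dots> = (\<Sum>j\<le>m. of_int (psum_zeta_coeff m j) * ((1 + x) ^ j - 1)) +
                  (\<Sum>j\<le>m. of_nat (m choose j) * 1 ^ j * (-1) ^ (m - j))"
    by (simp add: psum_zeta_coeff_def algebra_simps sum.distrib[symmetric])
  also have "(\<Sum>j\<le>m. of_nat (m choose j) * 1 ^ j * (-1) ^ (m - j)) = (1 + (-1) :: 'a) ^ m"
    by (rule binomial_ring[symmetric])
  also have "{..m} = insert 0 {1..m}" by auto
  finally show ?thesis using assms by (simp add: power_0_left)
qed

lemma power_sum_trunc_eq_zeta_trunc:
  assumes "m \<ge> 1"
  shows "power_sum_trunc N m = (\<Sum>j\<in>{1..m}. of_int (psum_zeta_coeff m j) * zeta_trunc N j)"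
proof -
  have "power_sum_trunc N m =
        (\<Sum>i\<in>{1..N}. \<Sum>j\<in>{1..m}. of_int (psum_zeta_coeff m j) * ((1 + mvar i) ^ j - 1))"
    unfolding power_sum_trunc_def by (intro sum.cong refl power_eq_sum_psum_zeta_coeff[OF assms])
  also have "\<dots> = (\<Sum>j\<in>{1..m}. of_int (psum_zeta_coeff m j) * zeta_trunc N j)"
    unfolding zeta_trunc_def by (subst sum.swap) (simp add: sum_distrib_left)
  finally show ?thesis .
qed

text \<open>Expanding each \<open>p_|B|\<close> in \<open>X_G = \<Sum>_S (-1)^|S| \<Prod>_B p_|B|\<close> in the \<open>\<zeta>_j\<close> gives one term for
  every edge set \<open>S\<close> and every choice of an index \<open>g B \<in> {1..|B|}\<close> for each block \<open>B\<close>.\<close>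
definition expansion_terms :: "'v set \<Rightarrow> 'v set set \<Rightarrow> ('v set set \<times> ('v set \<Rightarrow> nat)) set" where
  "expansion_terms V E = (SIGMA S:Pow E. PiE (blocks V S) (\<lambda>B. {1..card B}))"

definition term_monomial :: "'v set \<Rightarrow> 'v set set \<times> ('v set \<Rightarrow> nat) \<Rightarrow> nat multiset" where
  "term_monomial V x = image_mset (snd x) (mset_set (blocks V (fst x)))"

definition term_weight :: "'v set \<Rightarrow> 'v set set \<times> ('v set \<Rightarrow> nat) \<Rightarrow> int" where
  "term_weight V x = (-1) ^ card (fst x) * (\<Prod>B\<in>blocks V (fst x). psum_zeta_coeff (card B) (snd x B))"

definition zeta_coeff :: "'v set \<Rightarrow> 'v set set \<Rightarrow> nat multiset \<Rightarrow> rat" where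
  "zeta_coeff V E lam = of_int (\<Sum>x | x \<in> expansion_terms V E \<and> term_monomial V x = lam. term_weight V x)"

lemma finite_blocks: "finite V \<Longrightarrow> \<forall>e\<in>S. e \<subseteq> V \<Longrightarrow> finite (blocks V S)"
  unfolding blocks_def by (rule finite_quotient) (auto dest: equiv_type[OF equiv_component_rel])

lemma card_blocks_pos: "finite V \<Longrightarrow> \<forall>e\<in>S. e \<subseteq> V \<Longrightarrow> B \<in> blocks V S \<Longrightarrow> card B \<ge> 1"
  unfolding blocks_def
  using in_quotient_imp_non_empty[OF equiv_component_rel] in_quotient_imp_subset[OF equiv_component_rel]
  by (metis One_nat_def Suc_leI card_gt_0_iff rev_finite_subset)

lemma finite_block_choices:
  "simple_graph V E \<Longrightarrow> S \<subseteq> E \<Longrightarrow> finite (PiE (blocks V S) (\<lambda>B. {1..card B}))"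
  by (intro finite_PiE finite_blocks simple_graph_edges_subset) (auto simp: simple_graph_finite)

lemma finite_expansion_terms: "simple_graph V E \<Longrightarrow> finite (expansion_terms V E)"
  unfolding expansion_terms_def
  by (intro finite_SigmaI finite_block_choices) (auto simp: simple_graph_finite)

lemma zeta_mono_trunc_term_monomial:
  "finite (blocks V S) \<Longrightarrow> zeta_mono_trunc N (term_monomial V (S, g)) = (\<Prod>B\<in>blocks V S. zeta_trunc N (g B))"
  by (simp add: zeta_mono_trunc_def term_monomial_def prod_unfold_prod_mset
      image_mset.compositionality comp_def)

lemma sum_monochromatic_colorings_zeta_expansion:
  assumes G: "simple_graph V E" and "S \<subseteq> E"
  shows "(\<Sum>\<kappa>\<in>{\<kappa>\<in>colorings N V. monochromatic S \<kappa>}. \<Prod>v\<in>V. mvar (\<kappa> v)) =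
      (\<Sum>g\<in>PiE (blocks V S) (\<lambda>B. {1..card B}).
         of_int (\<Prod>B\<in>blocks V S. psum_zeta_coeff (card B) (g B)) * zeta_mono_trunc N (term_monomial V (S, g)))"
proof -
  have fin: "finite V" and S: "\<forall>e\<in>S. e \<subseteq> V"
    using simple_graph_finite[OF G] simple_graph_edges_subset[OF G \<open>S \<subseteq> E\<close>] by auto
  have finB: "finite (blocks V S)" using finite_blocks[OF fin S] .
  have "(\<Sum>\<kappa>\<in>{\<kappa>\<in>colorings N V. monochromatic S \<kappa>}. \<Prod>v\<in>V. mvar (\<kappa> v)) =
        (\<Prod>B\<in>blocks V S. \<Sum>j\<in>{1..card B}. of_int (psum_zeta_coeff (card B) j) * zeta_trunc N j)"
    unfolding sum_monochromatic_colorings[OF fin S]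
    by (intro prod.cong refl power_sum_trunc_eq_zeta_trunc card_blocks_pos[OF fin S])
  also have "\<dots> = (\<Sum>g\<in>PiE (blocks V S) (\<lambda>B. {1..card B}).
      \<Prod>B\<in>blocks V S. of_int (psum_zeta_coeff (card B) (g B)) * zeta_trunc N (g B))"
    by (rule prod_sum_PiE) (use finB in auto)
  also have "\<dots> = (\<Sum>g\<in>PiE (blocks V S) (\<lambda>B. {1..card B}).
      of_int (\<Prod>B\<in>blocks V S. psum_zeta_coeff (card B) (g B)) * zeta_mono_trunc N (term_monomial V (S, g)))"
    by (simp add: prod.distrib zeta_mono_trunc_term_monomial[OF finB])
  finally show ?thesis .
qed

lemma chromatic_trunc_expansion:
  assumes G: "simple_graph V E"
  shows "chromatic_trunc V E N =
    (\<Sum>x\<in>expansion_terms V E. of_int (term_weight V x) * zeta_mono_trunc N (term_monomial V x))"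
proof -
  have "chromatic_trunc V E N = (\<Sum>S\<in>Pow E. \<Sum>g\<in>PiE (blocks V S) (\<lambda>B. {1..card B}).
      of_int (term_weight V (S, g)) * zeta_mono_trunc N (term_monomial V (S, g)))"
    unfolding chromatic_trunc_inclusion_exclusion[OF G]
    by (intro sum.cong refl)
       (simp add: sum_monochromatic_colorings_zeta_expansion[OF G] sum_distrib_left term_weight_def mult.assoc)
  also have "\<dots> = (\<Sum>x\<in>expansion_terms V E. of_int (term_weight V x) * zeta_mono_trunc N (term_monomial V x))"
    unfolding expansion_terms_def using simple_graph_finite(2)[OF G] finite_block_choices[OF G]
    by (subst sum.Sigma) (auto simp: split_def)
  finally show ?thesis .
qed

lemma zeta_coeff_nonzero:
  "zeta_coeff V E lam \<noteq> 0 \<Longrightarrow> lam \<in> term_monomial V ` expansion_terms V E"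
  unfolding zeta_coeff_def by (metis (mono_tags, lifting) empty_Collect_eq imageI of_int_0 sum.empty)

lemma chromatic_trunc_zeta_coeff:
  assumes G: "simple_graph V E"
  shows "chromatic_trunc V E N =
    (\<Sum>lam | zeta_coeff V E lam \<noteq> 0. Poly_Mapping.single 0 (zeta_coeff V E lam) * zeta_mono_trunc N lam)"
proof -
  let ?I = "expansion_terms V E" and ?L = "term_monomial V"
  have fin: "finite ?I" using finite_expansion_terms[OF G] .
  have "chromatic_trunc V E N =
      (\<Sum>lam\<in>?L ` ?I. \<Sum>x | x \<in> ?I \<and> ?L x = lam. of_int (term_weight V x) * zeta_mono_trunc N (?L x))"
    unfolding chromatic_trunc_expansion[OF G] by (rule sum.image_gen[OF fin])
  also have "\<dots> = (\<Sum>lam\<in>?L ` ?I. Poly_Mapping.single 0 (zeta_coeff V E lam) * zeta_mono_trunc N lam)"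
  proof (rule sum.cong[OF refl])
    fix lam
    have "(\<Sum>x | x \<in> ?I \<and> ?L x = lam. of_int (term_weight V x) * zeta_mono_trunc N (?L x)) =
          (\<Sum>x | x \<in> ?I \<and> ?L x = lam. of_int (term_weight V x) * zeta_mono_trunc N lam)"
      by (rule sum.cong) auto
    also have "\<dots> = of_int (\<Sum>x | x \<in> ?I \<and> ?L x = lam. term_weight V x) * zeta_mono_trunc N lam"
      by (simp add: sum_distrib_right)
    also have "\<dots> = Poly_Mapping.single 0 (zeta_coeff V E lam) * zeta_mono_trunc N lam"
      by (simp only: zeta_coeff_def single_of_int)
    finally show "(\<Sum>x | x \<in> ?I \<and> ?L x = lam. of_int (term_weight V x) * zeta_mono_trunc N (?L x)) =
          Poly_Mapping.single 0 (zeta_coeff V E lam) * zeta_mono_trunc N lam" .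
  qed
  also have "\<dots> = (\<Sum>lam | zeta_coeff V E lam \<noteq> 0.
      Poly_Mapping.single 0 (zeta_coeff V E lam) * zeta_mono_trunc N lam)"
    by (rule sum.mono_neutral_right) (use fin zeta_coeff_nonzero in auto)
  finally show ?thesis .
qed

lemma zeta_poly_zeta_coeff:
  assumes G: "simple_graph V E"
  shows "zeta_poly (zeta_coeff V E)"
  unfolding zeta_poly_def
proof
  show "finite {lam. zeta_coeff V E lam \<noteq> 0}"
    by (rule finite_subset[OF _ finite_imageI[OF finite_expansion_terms[OF G]]])
       (auto dest: zeta_coeff_nonzero)
  show "\<forall>lam. zeta_coeff V E lam \<noteq> 0 \<longrightarrow> 0 \<notin># lam"
  proof (intro allI impI)
    fix lam assume "zeta_coeff V E lam \<noteq> 0"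
    then obtain S g where "S \<subseteq> E" "g \<in> PiE (blocks V S) (\<lambda>B. {1..card B})" "lam = term_monomial V (S, g)"
      using zeta_coeff_nonzero[of V E lam] by (auto simp: expansion_terms_def)
    moreover have "finite (blocks V S)"
      using finite_blocks simple_graph_finite(1)[OF G] simple_graph_edges_subset[OF G \<open>S \<subseteq> E\<close>] by blast
    ultimately show "0 \<notin># lam" by (force simp: term_monomial_def)
  qed
qed

lemma zeta_eval_zeta_coeff:
  assumes G: "simple_graph V E"
  shows "zeta_eval (zeta_coeff V E) = chromatic_sym V E"
proof
  fix \<alpha> :: "nat \<Rightarrow>\<^sub>0 nat"
  define N where "N = \<Sum>(Poly_Mapping.keys \<alpha>)"
  have K: "Poly_Mapping.keys \<alpha> \<subseteq> {..N}"
    unfolding N_def by (auto intro: member_le_sum)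
  have "zeta_eval (zeta_coeff V E) \<alpha> = Poly_Mapping.lookup (chromatic_trunc V E N) \<alpha>"
    using agrees_upto_zeta_eval[of N "zeta_coeff V E"] K
    by (simp add: agrees_upto_def chromatic_trunc_zeta_coeff[OF G])
  also have "\<dots> = chromatic_sym V E \<alpha>"
    using agrees_upto_chromatic_trunc[of V N E] simple_graph_finite[OF G] K
    by (simp add: agrees_upto_def)
  finally show "zeta_eval (zeta_coeff V E) \<alpha> = chromatic_sym V E \<alpha>" .
qed

section \<open>The chromatic polynomial\<close>

lemma poly_eqI_of_nat:
  fixes p q :: "'a::{idom, ring_char_0} poly"
  assumes "\<And>n. poly p (of_nat n) = poly q (of_nat n)"
  shows "p = q"
proof (rule ccontr)
  assume "p \<noteq> q"
  hence "finite {x. poly (p - q) x = 0}" by (intro poly_roots_finite) simp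
  moreover have "range (of_nat :: nat \<Rightarrow> 'a) \<subseteq> {x. poly (p - q) x = 0}" using assms by auto
  ultimately show False
    using range_inj_infinite[OF inj_of_nat] finite_subset by blast
qed

text \<open>Specialising \<open>x_i \<mapsto> 1\<close> for \<open>1 \<le> i \<le> N\<close> (and \<open>x_i \<mapsto> 0\<close> otherwise) sends \<open>\<zeta>_n\<close> to \<open>N (2^n - 1)\<close>.\<close>
definition chromatic_poly :: "'v set \<Rightarrow> 'v set set \<Rightarrow> rat poly" where
  "chromatic_poly V E = (\<Sum>lam | zeta_coeff V E lam \<noteq> 0.
      smult (zeta_coeff V E lam) (\<Prod>n\<in>#lam. [:0, 2 ^ n - 1:]))"

lemma poly_chromatic_poly:
  assumes G: "simple_graph V E"
  shows "poly (chromatic_poly V E) (of_nat N) = of_nat (card (proper_colorings N V E))"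
proof -
  define a where "a i = (if i \<in> {1..N} then 1 else (0::rat))" for i
  have "of_nat (card (proper_colorings N V E)) = (\<Sum>\<kappa>\<in>proper_colorings N V E. \<Prod>v\<in>V. a (\<kappa> v))"
    by (simp add: a_def proper_colorings_def colorings_def PiE_def Pi_def)
  also have "\<dots> = (\<Sum>lam | zeta_coeff V E lam \<noteq> 0.
      zeta_coeff V E lam * (\<Prod>n\<in>#lam. \<Sum>i\<in>{1..N}. (1 + a i) ^ n - 1))"
    by (rule sum_proper_colorings_specialise[OF G zeta_eval_zeta_coeff[OF G]]) (simp add: a_def)
  also have "\<dots> = poly (chromatic_poly V E) (of_nat N)"
    by (simp add: a_def chromatic_poly_def poly_sum poly_prod_mset)
  finally show ?thesis ..
qed

definition add_color_class :: "'v set \<Rightarrow> 'v set \<Rightarrow> ('v \<Rightarrow> nat) \<Rightarrow> 'v \<Rightarrow> nat" where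
  "add_color_class V S \<kappa> = (\<lambda>v\<in>V. if v \<in> S then 1 else Suc (\<kappa> v))"

lemma proper_colorings_range:
  "\<kappa> \<in> proper_colorings N V E \<Longrightarrow> v \<in> V \<Longrightarrow> \<kappa> v \<in> {1..N}"
  by (auto simp: proper_colorings_def colorings_def)

lemma proper_coloringsD:
  "\<kappa> \<in> proper_colorings N V E \<Longrightarrow> {u, v} \<in> E \<Longrightarrow> \<kappa> u \<noteq> \<kappa> v"
  by (auto simp: proper_colorings_def proper_def)

lemma add_color_class_proper:
  assumes G: "simple_graph V E" and S: "indep_set V E S"
    and \<kappa>: "\<kappa> \<in> proper_colorings N (V - S) (edges_avoiding E S)"
  shows "add_color_class V S \<kappa> \<in> proper_colorings (Suc N) V E"
proof -
  have "add_color_class V S \<kappa> u \<noteq> add_color_class V S \<kappa> v" if e: "{u, v} \<in> E" for u v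
  proof -
    have "u \<in> V" "v \<in> V" using simple_graph_edgeD[OF G e] by auto
    moreover have "\<not> (u \<in> S \<and> v \<in> S)" using S e by (auto simp: indep_set_def)
    moreover have "\<kappa> u \<noteq> \<kappa> v" if "u \<notin> S" "v \<notin> S"
      using e that proper_coloringsD[OF \<kappa>] by (auto simp: edges_avoiding_def)
    moreover have "\<kappa> w > 0" if "w \<in> V - S" for w
      using proper_colorings_range[OF \<kappa> that] by simp
    ultimately show ?thesis by (auto simp: add_color_class_def)
  qed
  moreover have "add_color_class V S \<kappa> \<in> colorings (Suc N) V"
    using proper_colorings_range[OF \<kappa>] by (auto simp: add_color_class_def colorings_def)
  ultimately show ?thesis by (simp add: proper_colorings_def proper_def)
qed

lemma remove_color_class_proper:
  assumes G: "simple_graph V E" and \<kappa>: "\<kappa> \<in> proper_colorings (Suc N) V E"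
  defines "S \<equiv> {v\<in>V. \<kappa> v = 1}"
  shows "indep_set V E S" "(\<lambda>v\<in>V - S. \<kappa> v - 1) \<in> proper_colorings N (V - S) (edges_avoiding E S)"
proof -
  have range: "\<kappa> v \<in> {2..Suc N}" if "v \<in> V - S" for v
    using proper_colorings_range[OF \<kappa>] that by (fastforce simp: S_def)
  show "indep_set V E S"
    unfolding indep_set_def
  proof (intro conjI ballI notI)
    fix e assume "e \<in> E" "e \<subseteq> S"
    moreover obtain u v where "e = {u, v}"
      using G \<open>e \<in> E\<close> by (auto simp: simple_graph_def card_2_iff)
    ultimately show False using proper_coloringsD[OF \<kappa>, of u v] by (auto simp: S_def)
  qed (auto simp: S_def)
  have "(\<lambda>v\<in>V - S. \<kappa> v - 1) u \<noteq> (\<lambda>v\<in>V - S. \<kappa> v - 1) v"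
    if "{u, v} \<in> edges_avoiding E S" for u v
  proof -
    have e: "{u, v} \<in> E" and "u \<notin> S" "v \<notin> S" using that by (auto simp: edges_avoiding_def)
    hence "u \<in> V - S" "v \<in> V - S" using simple_graph_edgeD[OF G e] by auto
    thus ?thesis using range proper_coloringsD[OF \<kappa> e] by fastforce
  qed
  moreover have "\<kappa> v - 1 \<in> {1..N}" if "v \<in> V - S" for v
    using range[OF that] by auto
  hence "(\<lambda>v\<in>V - S. \<kappa> v - 1) \<in> colorings N (V - S)"
    by (auto simp: colorings_def)
  ultimately show "(\<lambda>v\<in>V - S. \<kappa> v - 1) \<in> proper_colorings N (V - S) (edges_avoiding E S)"
    by (simp add: proper_colorings_def proper_def)
qed

lemma remove_add_color_class:
  assumes S: "indep_set V E S" and \<kappa>: "\<kappa> \<in> proper_colorings N (V - S) E'"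
  shows "{v\<in>V. add_color_class V S \<kappa> v = 1} = S" "(\<lambda>v\<in>V - S. add_color_class V S \<kappa> v - 1) = \<kappa>"
proof -
  have "add_color_class V S \<kappa> v = 1 \<longleftrightarrow> v \<in> S" if "v \<in> V" for v
    using that proper_colorings_range[OF \<kappa>, of v] by (auto simp: add_color_class_def)
  thus "{v\<in>V. add_color_class V S \<kappa> v = 1} = S"
    using S by (auto simp: indep_set_def)
  show "(\<lambda>v\<in>V - S. add_color_class V S \<kappa> v - 1) = \<kappa>"
    using \<kappa> by (auto simp: add_color_class_def proper_colorings_def colorings_def PiE_def extensional_def)
qed

lemma bij_betw_add_color_class:
  assumes G: "simple_graph V E"
  shows "bij_betw (\<lambda>(S, \<kappa>). add_color_class V S \<kappa>)
           (SIGMA S:{S. indep_set V E S}. proper_colorings N (V - S) (edges_avoiding E S))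
           (proper_colorings (Suc N) V E)"
proof -
  define remove where
    "remove \<kappa> = ({v\<in>V. \<kappa> v = 1}, \<lambda>v\<in>V - {v\<in>V. \<kappa> v = 1}. \<kappa> v - 1)" for \<kappa> :: "'a \<Rightarrow> nat"
  let ?A = "SIGMA S:{S. indep_set V E S}. proper_colorings N (V - S) (edges_avoiding E S)"
  have "remove ((\<lambda>(S, \<kappa>). add_color_class V S \<kappa>) x) = x" if "x \<in> ?A" for x
  proof -
    obtain S \<kappa> where x: "x = (S, \<kappa>)" "indep_set V E S"
      "\<kappa> \<in> proper_colorings N (V - S) (edges_avoiding E S)"
      using \<open>x \<in> ?A\<close> by auto
    show ?thesis using remove_add_color_class[OF x(2,3)] by (simp add: x(1) remove_def)
  qed
  moreover have "(\<lambda>(S, \<kappa>). add_color_class V S \<kappa>) (remove \<kappa>) = \<kappa>"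
    if \<kappa>: "\<kappa> \<in> proper_colorings (Suc N) V E" for \<kappa>
  proof
    fix v show "(\<lambda>(S, \<kappa>). add_color_class V S \<kappa>) (remove \<kappa>) v = \<kappa> v"
      using proper_colorings_range[OF \<kappa>, of v] \<kappa>
      by (auto simp: remove_def add_color_class_def proper_colorings_def colorings_def PiE_def extensional_def)
  qed
  moreover have "(\<lambda>(S, \<kappa>). add_color_class V S \<kappa>) ` ?A \<subseteq> proper_colorings (Suc N) V E"
    using add_color_class_proper[OF G] by auto
  moreover have "remove ` proper_colorings (Suc N) V E \<subseteq> ?A"
    using remove_color_class_proper[OF G] by (auto simp: remove_def)
  ultimately show ?thesis by (intro bij_betw_byWitness) auto
qed

lemma sum_proper_colorings_Suc:
  assumes G: "simple_graph V E"
  shows "(\<Sum>\<kappa>\<in>proper_colorings (Suc N) V E. w \<kappa>) =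
    (\<Sum>S | indep_set V E S. \<Sum>\<kappa>\<in>proper_colorings N (V - S) (edges_avoiding E S). w (add_color_class V S \<kappa>))"
proof -
  have fin: "finite V" using simple_graph_finite[OF G] by simp
  have "(\<Sum>\<kappa>\<in>proper_colorings (Suc N) V E. w \<kappa>) =
      (\<Sum>(S, \<kappa>)\<in>(SIGMA S:{S. indep_set V E S}. proper_colorings N (V - S) (edges_avoiding E S)).
         w (add_color_class V S \<kappa>))"
    using sum.reindex_bij_betw[OF bij_betw_add_color_class[OF G], of w] by (simp add: case_prod_beta')
  also have "\<dots> = (\<Sum>S | indep_set V E S. \<Sum>\<kappa>\<in>proper_colorings N (V - S) (edges_avoiding E S).
         w (add_color_class V S \<kappa>))"
    by (rule sum.Sigma[symmetric]) (auto simp: fin finite_indep_set finite_proper_colorings)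
  finally show ?thesis .
qed

lemma chromatic_poly_pcompose:
  assumes G: "simple_graph V E"
  shows "pcompose (chromatic_poly V E) [:1, 1:] =
         (\<Sum>S | indep_set V E S. chromatic_poly (V - S) (edges_avoiding E S))"
proof (rule poly_eqI_of_nat)
  fix N
  have "poly (pcompose (chromatic_poly V E) [:1, 1:]) (of_nat N) =
        of_nat (card (proper_colorings (Suc N) V E))"
    using poly_chromatic_poly[OF G, of "Suc N"] by (simp add: poly_pcompose add.commute)
  also have "card (proper_colorings (Suc N) V E) =
      (\<Sum>S | indep_set V E S. card (proper_colorings N (V - S) (edges_avoiding E S)))"
    using sum_proper_colorings_Suc[OF G, where w = "\<lambda>_. 1::nat"] by simp
  finally show "poly (pcompose (chromatic_poly V E) [:1, 1:]) (of_nat N) =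
      poly (\<Sum>S | indep_set V E S. chromatic_poly (V - S) (edges_avoiding E S)) (of_nat N)"
    by (simp add: poly_sum poly_chromatic_poly simple_graph_edges_avoiding[OF G])
qed

lemma card_proper_colorings_0:
  assumes G: "simple_graph V E"
  shows "card (proper_colorings 0 V E) = of_bool (V = {})"
proof (cases "V = {}")
  case True
  hence "E = {}" using G by (auto simp: simple_graph_def)
  thus ?thesis using True by (simp add: proper_colorings_def colorings_def proper_def)
next
  case False
  hence "colorings 0 V = {}" by (auto simp: colorings_def PiE_eq_empty_iff)
  thus ?thesis using False by (simp add: proper_colorings_def)
qed

lemma edges_avoiding_empty [simp]: "edges_avoiding E {} = E"
  by (simp add: edges_avoiding_def)

section \<open>Acyclic orientations and their sinks\<close>

definition acyclic_orientations :: "'v set set \<Rightarrow> ('v \<times> 'v) set set" where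
  "acyclic_orientations E = {D. orientation E D \<and> acyclic D}"

lemma orientation_subset_Times:
  "simple_graph V E \<Longrightarrow> orientation E D \<Longrightarrow> D \<subseteq> V \<times> V"
  unfolding orientation_def using simple_graph_edgeD by fastforce

lemma finite_acyclic_orientations:
  assumes "simple_graph V E"
  shows "finite (acyclic_orientations E)"
proof -
  have "acyclic_orientations E \<subseteq> Pow (V \<times> V)"
    using orientation_subset_Times[OF assms] by (auto simp: acyclic_orientations_def)
  thus ?thesis using simple_graph_finite[OF assms] by (meson finite_Pow_iff finite_SigmaI finite_subset)
qed

lemma finite_sinks: "finite V \<Longrightarrow> finite (sinks V D)"
  by (simp add: sinks_def)

lemma sinks_nonempty:
  assumes G: "simple_graph V E" and "V \<noteq> {}" and D: "D \<in> acyclic_orientations E"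
  shows "sinks V D \<noteq> {}"
proof -
  have sub: "D \<subseteq> V \<times> V"
    using D orientation_subset_Times[OF G] by (auto simp: acyclic_orientations_def)
  have "finite D" using sub simple_graph_finite[OF G] by (meson finite_SigmaI finite_subset)
  hence "wf (D\<inverse>)"
    using D finite_acyclic_wf_converse by (auto simp: acyclic_orientations_def)
  then obtain z where "z \<in> V" "\<forall>y. (y, z) \<in> D\<inverse> \<longrightarrow> y \<notin> V"
    using \<open>V \<noteq> {}\<close> unfolding wf_eq_minimal by blast
  hence "z \<in> sinks V D" using sub by (auto simp: sinks_def)
  thus ?thesis by auto
qed

lemma indep_set_if_subset_sinks:
  assumes "simple_graph V E" "orientation E D" "S \<subseteq> sinks V D"
  shows "indep_set V E S"
  unfolding indep_set_def
proof (intro conjI ballI notI)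
  show "S \<subseteq> V" using assms(3) by (auto simp: sinks_def)
next
  fix e assume "e \<in> E" "e \<subseteq> S"
  moreover obtain u v where "e = {u, v}"
    using \<open>e \<in> E\<close> assms(1) by (auto simp: simple_graph_def card_2_iff)
  moreover have "(u, v) \<in> D \<or> (v, u) \<in> D"
    using assms(2) \<open>e \<in> E\<close> calculation by (auto simp: orientation_def)
  ultimately show False using assms(3) by (auto simp: sinks_def)
qed

lemma acyclic_Un_edges_into:
  assumes ac: "acyclic D" and D: "\<forall>(x,y)\<in>D. x \<notin> S \<and> y \<notin> S"
    and I: "\<forall>(x,y)\<in>I. x \<notin> S \<and> y \<in> S"
  shows "acyclic (D \<union> I)"
  unfolding acyclic_def
proof
  fix x
  have "(x, y) \<in> D\<^sup>+" if "(x, y) \<in> (D \<union> I)\<^sup>+" "y \<notin> S" for y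
    using that
  proof (induction rule: trancl_induct)
    case (step y z)
    hence "(y, z) \<in> D" "y \<notin> S" using D I by auto
    thus ?case using step by (meson trancl.trancl_into_trancl)
  qed (use I in auto)
  moreover have "x \<notin> S" if "(x, x) \<in> (D \<union> I)\<^sup>+"
    using tranclD[OF that] D I by auto
  ultimately show "(x, x) \<notin> (D \<union> I)\<^sup>+"
    using ac by (auto simp: acyclic_def)
qed

lemma restrict_acyclic_orientation:
  assumes "D \<in> acyclic_orientations E"
  shows "{(u, v)\<in>D. u \<notin> S \<and> v \<notin> S} \<in> acyclic_orientations (edges_avoiding E S)"
proof -
  have "orientation E D" "acyclic D" using assms by (auto simp: acyclic_orientations_def)
  hence "orientation (edges_avoiding E S) {(u, v)\<in>D. u \<notin> S \<and> v \<notin> S}"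
    by (auto simp: orientation_def edges_avoiding_def)
  moreover have "acyclic {(u, v)\<in>D. u \<notin> S \<and> v \<notin> S}"
    using \<open>acyclic D\<close> by (rule acyclic_subset) auto
  ultimately show ?thesis by (simp add: acyclic_orientations_def)
qed

lemma extend_acyclic_orientation:
  assumes S: "indep_set V E S" and D: "D \<in> acyclic_orientations (edges_avoiding E S)"
  defines "D' \<equiv> D \<union> {(u, v). v \<in> S \<and> {u, v} \<in> E}"
  shows "D' \<in> acyclic_orientations E" "S \<subseteq> sinks V D'"
proof -
  have o: "orientation (edges_avoiding E S) D" and ac: "acyclic D"
    using D by (auto simp: acyclic_orientations_def)
  have out: "\<not> (u \<in> S \<and> v \<in> S)" if "{u, v} \<in> E" for u v
    using S that by (auto simp: indep_set_def)
  have DS: "\<forall>(u, v)\<in>D. u \<notin> S \<and> v \<notin> S"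
    using o by (auto simp: orientation_def edges_avoiding_def)
  have into: "\<forall>(u, v)\<in>{(u, v). v \<in> S \<and> {u, v} \<in> E}. u \<notin> S \<and> v \<in> S"
    using out by auto
  have "orientation E D'"
    unfolding orientation_def
  proof (intro conjI allI impI)
    show "D' \<subseteq> {(u, v). {u, v} \<in> E}"
      using o by (auto simp: D'_def orientation_def edges_avoiding_def)
  next
    fix u v assume e: "{u, v} \<in> E"
    show "(u, v) \<in> D' \<longleftrightarrow> (v, u) \<notin> D'"
    proof (cases "u \<in> S \<or> v \<in> S")
      case True
      thus ?thesis using out[OF e] e DS by (auto simp: D'_def insert_commute)
    next
      case False
      hence "{u, v} \<in> edges_avoiding E S" using e by (auto simp: edges_avoiding_def)
      thus ?thesis using o False by (auto simp: D'_def orientation_def)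
    qed
  qed
  moreover have "acyclic D'"
    unfolding D'_def using ac DS into by (rule acyclic_Un_edges_into)
  ultimately show "D' \<in> acyclic_orientations E" by (simp add: acyclic_orientations_def)
  show "S \<subseteq> sinks V D'"
    using S DS into by (fastforce simp: sinks_def indep_set_def D'_def)
qed

lemma card_acyclic_orientations_sinks_superset:
  assumes S: "indep_set V E S"
  shows "card {D\<in>acyclic_orientations E. S \<subseteq> sinks V D} =
         card (acyclic_orientations (edges_avoiding E S))"
proof (rule bij_betw_same_card)
  let ?into = "{(u, v). v \<in> S \<and> {u, v} \<in> E}"
  show "bij_betw (\<lambda>D. {(u, v)\<in>D. u \<notin> S \<and> v \<notin> S})
          {D\<in>acyclic_orientations E. S \<subseteq> sinks V D} (acyclic_orientations (edges_avoiding E S))"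
  proof (rule bij_betw_byWitness[where f' = "\<lambda>D. D \<union> ?into"])
    show "\<forall>D\<in>{D\<in>acyclic_orientations E. S \<subseteq> sinks V D}.
            {(u, v)\<in>D. u \<notin> S \<and> v \<notin> S} \<union> ?into = D"
    proof (intro ballI set_eqI)
      fix D and p :: "'a \<times> 'a"
      assume D: "D \<in> {D\<in>acyclic_orientations E. S \<subseteq> sinks V D}"
      hence o: "orientation E D" and sk: "S \<subseteq> sinks V D"
        by (auto simp: acyclic_orientations_def)
      obtain u v where p: "p = (u, v)" by fastforce
      show "p \<in> {(u, v)\<in>D. u \<notin> S \<and> v \<notin> S} \<union> ?into \<longleftrightarrow> p \<in> D"
        using o sk unfolding p orientation_def sinks_def by blast
    qed
    show "\<forall>D\<in>acyclic_orientations (edges_avoiding E S).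
            {(u, v)\<in>D \<union> ?into. u \<notin> S \<and> v \<notin> S} = D"
      by (auto simp: acyclic_orientations_def orientation_def edges_avoiding_def)
    show "(\<lambda>D. {(u, v)\<in>D. u \<notin> S \<and> v \<notin> S}) ` {D\<in>acyclic_orientations E. S \<subseteq> sinks V D}
            \<subseteq> acyclic_orientations (edges_avoiding E S)"
      using restrict_acyclic_orientation by blast
    show "(\<lambda>D. D \<union> ?into) ` acyclic_orientations (edges_avoiding E S)
            \<subseteq> {D\<in>acyclic_orientations E. S \<subseteq> sinks V D}"
      using extend_acyclic_orientation[OF S] by blast
  qed
qed

lemma sum_Pow_power_card:
  fixes s :: "'a::comm_semiring_1"
  assumes "finite K"
  shows "(\<Sum>U\<in>Pow K. s ^ card U) = (s + 1) ^ card K"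
proof -
  have "(s + 1) ^ card K = (\<Prod>x\<in>K. s + 1)" by simp
  also have "\<dots> = (\<Sum>U\<in>Pow K. (\<Prod>x\<in>U. s) * (\<Prod>x\<in>K - U. 1))" by (rule prod_add[OF assms])
  finally show ?thesis by simp
qed

lemma sum_subsets_of_sinks:
  fixes h :: "'v set \<Rightarrow> 'a::comm_semiring_1"
  assumes G: "simple_graph V E"
  shows "(\<Sum>D\<in>acyclic_orientations E. \<Sum>S\<in>Pow (sinks V D). h S) =
         (\<Sum>S | indep_set V E S. h S * of_nat (card (acyclic_orientations (edges_avoiding E S))))"
proof -
  let ?A = "acyclic_orientations E" and ?I = "{S. indep_set V E S}"
  have fin: "finite ?A" "finite ?I"
    using finite_acyclic_orientations[OF G] finite_indep_set simple_graph_finite[OF G] by auto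
  have "Pow (sinks V D) = {S\<in>?I. S \<subseteq> sinks V D}" if "D \<in> ?A" for D
    using that indep_set_if_subset_sinks[OF G] by (auto simp: acyclic_orientations_def)
  hence "(\<Sum>D\<in>?A. \<Sum>S\<in>Pow (sinks V D). h S) = (\<Sum>D\<in>?A. \<Sum>S\<in>{S\<in>?I. S \<subseteq> sinks V D}. h S)"
    by simp
  also have "\<dots> = (\<Sum>S\<in>?I. \<Sum>D | D \<in> ?A \<and> S \<subseteq> sinks V D. h S)"
    by (rule sum.swap_restrict[OF fin])
  also have "\<dots> = (\<Sum>S\<in>?I. h S * of_nat (card (acyclic_orientations (edges_avoiding E S))))"
    by (intro sum.cong refl)
       (simp add: card_acyclic_orientations_sinks_superset[symmetric] mult.commute)
  finally show ?thesis .
qed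

lemma sum_power_card_sinks:
  fixes t :: "'a::comm_ring_1"
  assumes G: "simple_graph V E"
  shows "(\<Sum>D\<in>acyclic_orientations E. t ^ card (sinks V D)) =
         (\<Sum>S | indep_set V E S. (t - 1) ^ card S * of_nat (card (acyclic_orientations (edges_avoiding E S))))"
proof -
  have "t ^ card (sinks V D) = (\<Sum>S\<in>Pow (sinks V D). (t - 1) ^ card S)" for D
    using sum_Pow_power_card[OF finite_sinks[OF simple_graph_finite(1)[OF G]], of "t - 1"] by simp
  thus ?thesis by (simp add: sum_subsets_of_sinks[OF G])
qed

lemma sum_zero_power_card_sinks:
  assumes G: "simple_graph V E"
  shows "(\<Sum>D\<in>acyclic_orientations E. (0::'a::comm_semiring_1) ^ card (sinks V D)) = of_bool (V = {})"
proof (cases "V = {}")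
  case True
  hence "E = {}" using G by (auto simp: simple_graph_def)
  hence "acyclic_orientations E = {{}}"
    by (auto simp: acyclic_orientations_def orientation_def acyclic_def)
  thus ?thesis using True by (simp add: sinks_def)
next
  case False
  hence "(0::'a) ^ card (sinks V D) = 0" if "D \<in> acyclic_orientations E" for D
    using that sinks_nonempty[OF G] finite_sinks[OF simple_graph_finite(1)[OF G]]
    by (simp add: power_0_left card_eq_0_iff)
  thus ?thesis using False by simp
qed

lemma alternating_sum_acyclic_orientations:
  assumes G: "simple_graph V E"
  shows "(\<Sum>S | indep_set V E S. (-1) ^ card (V - S) * of_nat (card (acyclic_orientations (edges_avoiding E S))))
         = (of_bool (V = {}) :: 'a::comm_ring_1)"
proof -
  have sign: "(-1) ^ card (V - S) = (-1) ^ card V * ((-1) ^ card S :: 'a)" if "indep_set V E S" for S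
  proof -
    have "card V = card (V - S) + card S"
      using that simple_graph_finite(1)[OF G]
      by (auto simp: indep_set_def card_Diff_subset finite_subset card_mono)
    thus ?thesis by (simp add: power_add mult.assoc flip: power_mult_distrib)
  qed
  have "(\<Sum>S | indep_set V E S. (-1) ^ card S * of_nat (card (acyclic_orientations (edges_avoiding E S))))
         = (\<Sum>D\<in>acyclic_orientations E. (0::'a) ^ card (sinks V D))"
    by (simp add: sum_power_card_sinks[OF G])
  also have "\<dots> = of_bool (V = {})" by (rule sum_zero_power_card_sinks[OF G])
  finally have "(\<Sum>S | indep_set V E S. (-1) ^ card S * of_nat (card (acyclic_orientations (edges_avoiding E S))))
         = (of_bool (V = {}) :: 'a)" .
  hence "(-1) ^ card V * (\<Sum>S | indep_set V E S.
           (-1) ^ card S * of_nat (card (acyclic_orientations (edges_avoiding E S)))) = (of_bool (V = {}) :: 'a)"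
    by auto
  thus ?thesis by (simp add: sum_distrib_left sign mult.assoc)
qed

section \<open>Stanley's theorem and the sink generating function\<close>

text \<open>Stanley's theorem. Both sides satisfy the same recursion, obtained by removing the
  independent set of vertices of colour 1, respectively a set of sinks.\<close>
theorem poly_chromatic_poly_minus_one:
  assumes "simple_graph V E"
  shows "poly (chromatic_poly V E) (-1) = (-1) ^ card V * of_nat (card (acyclic_orientations E))"
  using assms
proof (induction "card V" arbitrary: V E rule: less_induct)
  case less
  note G = less.prems
  let ?I = "{S. indep_set V E S}"
  let ?a = "\<lambda>S. (-1) ^ card (V - S) * of_nat (card (acyclic_orientations (edges_avoiding E S))) :: rat"
  have fin: "finite ?I" using finite_indep_set simple_graph_finite[OF G] by auto
  have empty: "{} \<in> ?I" using G by (auto simp: indep_set_def simple_graph_def)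
  have IH: "poly (chromatic_poly (V - S) (edges_avoiding E S)) (-1) = ?a S" if "S \<in> ?I - {{}}" for S
  proof -
    have "V - S \<subset> V" using that by (auto simp: indep_set_def)
    hence "card (V - S) < card V" using simple_graph_finite(1)[OF G] by (rule psubset_card_mono[rotated])
    thus ?thesis using less.hyps simple_graph_edges_avoiding[OF G] by blast
  qed
  have "(\<Sum>S\<in>?I. poly (chromatic_poly (V - S) (edges_avoiding E S)) (-1)) = poly (chromatic_poly V E) 0"
    using arg_cong[OF chromatic_poly_pcompose[OF G], of "\<lambda>p. poly p (-1)"]
    by (simp add: poly_pcompose poly_sum)
  also have "\<dots> = of_bool (V = {})"
    using poly_chromatic_poly[OF G, of 0] card_proper_colorings_0[OF G] by simp
  also have "\<dots> = (\<Sum>S\<in>?I. ?a S)"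
    by (rule alternating_sum_acyclic_orientations[OF G, symmetric])
  finally show ?case using IH by (simp add: sum.remove[OF fin empty])
qed

lemma prod_add_color_class:
  fixes a :: "nat \<Rightarrow> rat"
  assumes "finite V" "S \<subseteq> V" "\<kappa> \<in> proper_colorings N (V - S) E'"
    and "a 1 = s" "\<And>i. i \<in> {2..Suc N} \<Longrightarrow> a i = -1"
  shows "(\<Prod>v\<in>V. a (add_color_class V S \<kappa> v)) = s ^ card S * (-1) ^ card (V - S)"
proof -
  have "(\<Prod>v\<in>V. a (add_color_class V S \<kappa> v)) =
        (\<Prod>v\<in>V - S. a (add_color_class V S \<kappa> v)) * (\<Prod>v\<in>S. a (add_color_class V S \<kappa> v))"
    by (rule prod.subset_diff[OF assms(2,1)])
  also have "(\<Prod>v\<in>S. a (add_color_class V S \<kappa> v)) = (\<Prod>v\<in>S. s)"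
    using assms(2,4) by (intro prod.cong refl) (auto simp: add_color_class_def)
  also have "(\<Prod>v\<in>V - S. a (add_color_class V S \<kappa> v)) = (\<Prod>v\<in>V - S. -1)"
    using proper_colorings_range[OF assms(3)] assms(5)
    by (intro prod.cong refl) (auto simp: add_color_class_def)
  finally show ?thesis by simp
qed

lemma sum_proper_colorings_Suc_weighted:
  fixes a :: "nat \<Rightarrow> rat"
  assumes G: "simple_graph V E" and "a 1 = s" "\<And>i. i \<in> {2..Suc N} \<Longrightarrow> a i = -1"
  shows "(\<Sum>\<kappa>\<in>proper_colorings (Suc N) V E. \<Prod>v\<in>V. a (\<kappa> v)) =
    (\<Sum>S | indep_set V E S. s ^ card S * (-1) ^ card (V - S) *
       of_nat (card (proper_colorings N (V - S) (edges_avoiding E S))))"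
proof -
  have "(\<Prod>v\<in>V. a (add_color_class V S \<kappa> v)) = s ^ card S * (-1) ^ card (V - S)"
    if "indep_set V E S" "\<kappa> \<in> proper_colorings N (V - S) (edges_avoiding E S)" for S \<kappa>
    using that assms(2,3) simple_graph_finite(1)[OF G]
    by (intro prod_add_color_class[where a = a]) (auto simp: indep_set_def)
  thus ?thesis unfolding sum_proper_colorings_Suc[OF G] by (simp add: mult.commute)
qed

lemma sum_specialised_zeta:
  fixes a :: "nat \<Rightarrow> rat"
  assumes "n \<ge> 1" "a 1 = s" "\<And>i. i \<in> {2..Suc N} \<Longrightarrow> a i = -1"
  shows "(\<Sum>i\<in>{1..Suc N}. (1 + a i) ^ n - 1) = (1 + s) ^ n - 1 - of_nat N"
proof -
  have "{1..Suc N} = insert 1 {2..Suc N}" by auto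
  moreover have "(\<Sum>i\<in>{2..Suc N}. (1 + a i) ^ n - 1) = (\<Sum>i\<in>{2..Suc N}. -1)"
    using assms by (intro sum.cong refl) (simp add: power_0_left)
  ultimately show ?thesis using assms(2) by simp
qed

lemma prod_mset_power: "(\<Prod>n\<in>#M. x ^ n) = (x::'a::comm_monoid_mult) ^ sum_mset M"
  by (induction M) (auto simp: power_add)

lemma sum_indep_sets_eq_zeta_specialisation:
  assumes G: "simple_graph V E" and c: "zeta_poly c" and eq: "zeta_eval c = chromatic_sym V E"
  shows "(\<Sum>S | indep_set V E S. (t - 1) ^ card S * (-1) ^ card (V - S) *
           of_nat (card (proper_colorings N (V - S) (edges_avoiding E S)))) =
         (\<Sum>lam | c lam \<noteq> 0. c lam * (\<Prod>n\<in>#lam. t ^ n - 1 - of_nat N))"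
proof -
  define a where "a i = (if i = 1 then t - 1 else if i \<in> {2..Suc N} then -1 else 0)" for i
  have a: "a 1 = t - 1" "\<And>i. i \<in> {2..Suc N} \<Longrightarrow> a i = -1" by (auto simp: a_def)
  have pos: "n \<ge> 1" if "c lam \<noteq> 0" "n \<in># lam" for lam n
    using c that unfolding zeta_poly_def by (metis less_one not_le)
  have "(\<Sum>S | indep_set V E S. (t - 1) ^ card S * (-1) ^ card (V - S) *
           of_nat (card (proper_colorings N (V - S) (edges_avoiding E S)))) =
        (\<Sum>\<kappa>\<in>proper_colorings (Suc N) V E. \<Prod>v\<in>V. a (\<kappa> v))"
    by (rule sum_proper_colorings_Suc_weighted[where a = a, OF G a, symmetric])
  also have "\<dots> = (\<Sum>lam | c lam \<noteq> 0. c lam * (\<Prod>n\<in>#lam. \<Sum>i\<in>{1..Suc N}. (1 + a i) ^ n - 1))"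
    by (rule sum_proper_colorings_specialise[OF G eq]) (auto simp: a_def)
  also have "\<dots> = (\<Sum>lam | c lam \<noteq> 0. c lam * (\<Prod>n\<in>#lam. t ^ n - 1 - of_nat N))"
    using sum_specialised_zeta[where a = a, OF _ a] pos
    by (intro sum.cong refl arg_cong[where f = "(*) _"] arg_cong[where f = prod_mset] image_mset_cong)
       auto
  finally show ?thesis .
qed

lemma sum_power_card_sinks_eq_zeta_coefficients:
  assumes G: "simple_graph V E" and c: "zeta_poly c" and eq: "zeta_eval c = chromatic_sym V E"
  shows "(\<Sum>D\<in>acyclic_orientations E. t ^ card (sinks V D)) = (\<Sum>lam | c lam \<noteq> 0. c lam * t ^ sum_mset lam)"
proof -
  let ?I = "{S. indep_set V E S}"
  define P where "P = (\<Sum>S\<in>?I. smult ((t - 1) ^ card S * (-1) ^ card (V - S))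
      (chromatic_poly (V - S) (edges_avoiding E S)))"
  define Q where "Q = (\<Sum>lam | c lam \<noteq> 0. smult (c lam) (\<Prod>n\<in>#lam. [:t ^ n - 1, -1:]))"
  have "P = Q"
  proof (rule poly_eqI_of_nat)
    fix N
    have "poly P (of_nat N) = (\<Sum>S\<in>?I. (t - 1) ^ card S * (-1) ^ card (V - S) *
        of_nat (card (proper_colorings N (V - S) (edges_avoiding E S))))"
      by (simp add: P_def poly_sum poly_chromatic_poly simple_graph_edges_avoiding[OF G])
    also have "\<dots> = poly Q (of_nat N)"
      by (simp add: sum_indep_sets_eq_zeta_specialisation[OF G c eq] Q_def poly_sum poly_prod_mset)
    finally show "poly P (of_nat N) = poly Q (of_nat N)" .
  qed
  have "poly P (-1) = (\<Sum>S\<in>?I. (t - 1) ^ card S * of_nat (card (acyclic_orientations (edges_avoiding E S))))"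
    by (simp add: P_def poly_sum poly_chromatic_poly_minus_one simple_graph_edges_avoiding[OF G]
        mult_ac flip: power_mult_distrib)
  also have "\<dots> = (\<Sum>D\<in>acyclic_orientations E. t ^ card (sinks V D))"
    by (rule sum_power_card_sinks[OF G, symmetric])
  finally show ?thesis
    using \<open>P = Q\<close> by (simp add: Q_def poly_sum poly_prod_mset prod_mset_power)
qed

lemma coeff_sum_monom:
  "finite A \<Longrightarrow> coeff (\<Sum>x\<in>A. monom (c x) (f x)) k = (\<Sum>x | x \<in> A \<and> f x = k. c x)"
  by (simp add: coeff_sum sum.inter_filter[symmetric])

theorem theorem3p7:
  fixes V :: "'v set" and E :: "'v set set"
  assumes "simple_graph V E"
  shows "(\<exists>c. zeta_poly c \<and> zeta_eval c = chromatic_sym V E) \<and>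
         (\<forall>c. zeta_poly c \<and> zeta_eval c = chromatic_sym V E \<longrightarrow>
            (\<forall>k. of_nat (acyc_orient_sinks V E k) =
                 (\<Sum>lam\<in>{lam. c lam \<noteq> 0 \<and> sum_mset lam = k}. c lam)))"
proof (intro conjI allI impI)
  show "\<exists>c. zeta_poly c \<and> zeta_eval c = chromatic_sym V E"
    using zeta_poly_zeta_coeff[OF assms] zeta_eval_zeta_coeff[OF assms] by blast
next
  fix c k assume c: "zeta_poly c \<and> zeta_eval c = chromatic_sym V E"
  have "(\<Sum>D\<in>acyclic_orientations E. monom 1 (card (sinks V D))) =
        (\<Sum>lam | c lam \<noteq> 0. monom (c lam) (sum_mset lam))"
    using c by (intro poly_eqI_of_nat)
      (simp add: poly_sum poly_monom sum_power_card_sinks_eq_zeta_coefficients[OF assms])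
  from arg_cong[OF this, of "\<lambda>p. coeff p k"]
  show "of_nat (acyc_orient_sinks V E k) = (\<Sum>lam\<in>{lam. c lam \<noteq> 0 \<and> sum_mset lam = k}. c lam)"
    using finite_acyclic_orientations[OF assms] c
    by (simp add: coeff_sum_monom zeta_poly_def acyc_orient_sinks_def acyclic_orientations_def)
qed

end
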